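(* There exist $r_0>0$ and $c<\infty$ such that the following holds. Let $K$ be a hull with $r=r_K\le r_0$, $h=h_K$, let $U\in[-(rh)^{1/3},(rh)^{1/3}]$, let $g=g_K$ and $z_\pm=i\pm1$. Then \[\operatorname{Im}[g(z_\pm)]=1-\frac h2+O(hr),\qquad |g'(z_\pm)|=1+O(hr),\] \[\sin[\arg(g(z_\pm)-U)]=\frac{\sqrt2}{2}\Big[1\pm\frac U2+\frac{U^2}{8}-\frac h2+O(hr+r^3)\Big],\] where $|O(x)|\le cx$.
   Context: A (compact $\mathbb H$-)hull is a bounded, relatively closed set $K\subset\mathbb H$ such that $\mathbb H\setminus K$ is simply connected; $g_K:\mathbb H\setminus K\to\mathbb H$ is the conformal map with $g_K(z)=z+h_K/z+O(|z|^{-2})$ at $\infty$, $h_K=\operatorname{hcap}(K)$, $r_K=\sup\{|z|:z\in K\}$. $\arg$ takes values in $(0,\pi)$ on $\mathbb H$. *)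

theory Defs
  imports "HOL-Analysis.Analysis"
begin

definition UHP :: "complex set" where
  "UHP = {z. Im z > 0}"

definition is_hull :: "complex set \<Rightarrow> bool" where
  "is_hull K \<longleftrightarrow> K \<subseteq> UHP \<and> bounded K \<and> closure K \<inter> UHP = K
      \<and> simply_connected (UHP - K)"

definition hull_rad :: "complex set \<Rightarrow> real" where
  "hull_rad K = Sup (insert 0 (norm ` K))"

text \<open>g is the mapping-out function g_K with half-plane capacity h:
  a conformal (holomorphic, injective) map of H minus K onto H with
  g(z) = z + h/z + O(|z|^(-2)) as z tends to infinity.\<close>
definition is_gK :: "complex set \<Rightarrow> (complex \<Rightarrow> complex) \<Rightarrow> real \<Rightarrow> bool" where
  "is_gK K g h \<longleftrightarrow> g holomorphic_on (UHP - K) \<and> inj_on g (UHP - K)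
      \<and> g ` (UHP - K) = UHP
      \<and> (\<exists>C R. \<forall>z \<in> UHP - K. norm z \<ge> R \<longrightarrow>
              norm (g z - z - of_real h / z) \<le> C / (norm z)^2)"

end

theory Submission
  imports Defs "HOL-Complex_Analysis.Complex_Analysis"
begin

text \<open>
  The mapping-out function \<open>g\<close> satisfies \<open>0 < Im (g z) \<le> Im z\<close>, by the maximum principle applied
  to its inverse, which is close to the identity at infinity. Via Schwarz-Pick this makes \<open>g\<close>
  Lipschitz near the real axis outside the disc of radius \<open>r\<close>, so for every \<open>R > r\<close> it extends by
  Schwarz reflection to a function \<open>G\<close> on \<open>|z| > R\<close> that moves points towards the real axis. In the
  coordinate \<open>\<zeta> = 1/z\<close> the function \<open>(G (1/\<zeta>) - 1/\<zeta>) (R^-2 - \<zeta>^2) / \<zeta>\<close> then has nonnegative real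
  part and the value \<open>h / R^2\<close> at \<open>0\<close>, and the Schwarz lemma for such functions bounds
  \<open>g z - z - h/z\<close> by \<open>O(h R)\<close> for \<open>6/5 \<le> |z| \<le> 2\<close>; evaluated at \<open>z = 4 R \<i>\<close> it also gives
  \<open>h = O(R^2)\<close>. Letting \<open>R \<rightarrow> r\<close>, the three estimates at \<open>\<plusminus>1 + \<i>\<close> follow: the first directly, the
  second by Cauchy's inequality on a small disc, and the third by expanding
  \<open>sin (arg w) = Im w / |w|\<close> around the unperturbed point.
\<close>

section \<open>Tools from complex analysis\<close>

lemma norm_deriv_le_of_norm_le_on_cball:
  assumes holf: "f holomorphic_on D" and "open D" and \<rho>: "0 < \<rho>" and sub: "cball \<zeta> \<rho> \<subseteq> D"
    and bound: "\<And>z. z \<in> cball \<zeta> \<rho> \<Longrightarrow> norm (f z) \<le> e"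
  shows "norm (deriv f \<zeta>) \<le> e / \<rho>"
proof -
  have "f holomorphic_on ball \<zeta> \<rho>"
    using holf sub ball_subset_cball holomorphic_on_subset by blast
  moreover have "continuous_on (cball \<zeta> \<rho>) f"
    using holf sub holomorphic_on_imp_continuous_on continuous_on_subset by blast
  ultimately have "norm ((deriv ^^ 1) f \<zeta>) \<le> fact 1 * e / \<rho> ^ 1"
    by (rule Cauchy_inequality[OF _ _ \<rho>]) (use bound in \<open>auto simp: dist_norm norm_minus_commute\<close>)
  then show ?thesis by simp
qed

lemma norm_deriv_minus_one_le:
  assumes holg: "g holomorphic_on D" and oD: "open D" and "0 < \<rho>" and sub: "cball \<zeta> \<rho> \<subseteq> D"
    and near: "\<And>z. z \<in> cball \<zeta> \<rho> \<Longrightarrow> norm (g z - z) \<le> e"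
  shows "norm (deriv g \<zeta> - 1) \<le> e / \<rho>"
proof -
  have "\<zeta> \<in> D" using sub \<open>0 < \<rho>\<close> by auto
  then have "deriv (\<lambda>z. g z - z) \<zeta> = deriv g \<zeta> - 1"
    using holg oD holomorphic_on_imp_differentiable_at by (subst deriv_diff) auto
  moreover have "norm (deriv (\<lambda>z. g z - z) \<zeta>) \<le> e / \<rho>"
    using assms by (intro norm_deriv_le_of_norm_le_on_cball[of _ D]) (auto intro!: holomorphic_intros)
  ultimately show ?thesis by simp
qed

text \<open>Bloch's lemma makes the image of the half-size disc contain a ball around \<open>g w\<close> whose
  radius exceeds \<open>|g w - w|\<close>.\<close>

lemma near_identity_attains_centre:
  assumes holg: "g holomorphic_on D" and oD: "open D" and \<delta>: "0 < \<delta>" and e: "e \<le> \<delta> / 20"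
    and sub: "cball w \<delta> \<subseteq> D" and near: "\<And>z. z \<in> cball w \<delta> \<Longrightarrow> norm (g z - z) \<le> e"
  shows "\<exists>z\<in>ball w (\<delta>/2). g z = w"
proof -
  define \<rho> where "\<rho> = \<delta> / 2"
  have \<rho>: "0 < \<rho>" using \<delta> by (simp add: \<rho>_def)
  have deriv_near_one: "norm (deriv g \<zeta> - 1) \<le> 1/10" if "\<zeta> \<in> cball w \<rho>" for \<zeta>
  proof -
    have "cball \<zeta> \<rho> \<subseteq> cball w \<delta>"
      using that by (subst cball_subset_cball_iff) (auto simp: \<rho>_def dist_commute)
    then have "norm (deriv g \<zeta> - 1) \<le> e / \<rho>"
      using norm_deriv_minus_one_le[OF holg oD \<rho> _ near] sub by blast
    also have "\<dots> \<le> 1/10" using e \<rho> by (simp add: \<rho>_def divide_simps)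
    finally show ?thesis .
  qed
  have deriv_w: "9/10 \<le> norm (deriv g w)"
    using deriv_near_one[of w] \<rho> norm_triangle_ineq2[of 1 "deriv g w"]
    by (simp add: norm_minus_commute)
  have deriv_le: "norm (deriv g \<zeta>) \<le> 2 * norm (deriv g w)" if "\<zeta> \<in> ball w \<rho>" for \<zeta>
    using deriv_near_one[of \<zeta>] that deriv_w norm_triangle_ineq2[of "deriv g \<zeta>" 1] by simp
  have "cball w \<rho> \<subseteq> cball w \<delta>"
    using \<delta> by (intro subset_cball) (simp add: \<rho>_def)
  then have "g holomorphic_on cball w \<rho>"
    using holg sub holomorphic_on_subset by blast
  then have Bloch: "ball (g w) ((3 - 2 * sqrt 2) * \<rho> * norm (deriv g w)) \<subseteq> g ` ball w \<rho>"
    using \<rho> deriv_le by (rule Bloch_lemma)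
  have "sqrt 2 < (23/16 :: real)"
    by (rule real_less_lsqrt) (auto simp: power2_eq_square)
  have "\<rho> / 10 < (1/8) * \<rho> * (9/10)"
    using \<rho> by simp
  also have "\<dots> < (3 - 2 * sqrt 2) * \<rho> * (9/10)"
    using \<open>sqrt 2 < 23/16\<close> \<rho> by (intro mult_strict_right_mono) auto
  also have "\<dots> \<le> (3 - 2 * sqrt 2) * \<rho> * norm (deriv g w)"
    using \<open>sqrt 2 < 23/16\<close> \<rho> deriv_w by (intro mult_left_mono) auto
  finally have "\<rho> / 10 < (3 - 2 * sqrt 2) * \<rho> * norm (deriv g w)" .
  moreover have "norm (g w - w) \<le> \<rho> / 10"
    using near[of w] \<delta> e by (simp add: \<rho>_def)
  ultimately have "w \<in> ball (g w) ((3 - 2 * sqrt 2) * \<rho> * norm (deriv g w))"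
    by (simp add: dist_norm)
  with Bloch show ?thesis by (auto simp: \<rho>_def)
qed

lemma norm_diff_lt_norm_diff_cnj:
  assumes "0 < Im w" "0 < Im a"
  shows "norm (w - a) < norm (w - cnj a)"
proof -
  have "(Im w - Im a)^2 < (Im w + Im a)^2"
    using assms by (simp add: power2_eq_square algebra_simps)
  then have "norm (w - a)^2 < norm (w - cnj a)^2"
    by (simp add: cmod_power2)
  then show ?thesis by (rule power_less_imp_less_base) simp
qed

lemma Schwarz_Pick_half_plane:
  assumes holp: "p holomorphic_on ball z \<rho>" and \<rho>: "0 < \<rho>"
    and pos: "\<And>\<xi>. \<xi> \<in> ball z \<rho> \<Longrightarrow> 0 < Im (p \<xi>)"
  shows "norm (deriv p z) \<le> 2 * Im (p z) / \<rho>"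
proof -
  define a where "a = p z"
  have a: "0 < Im a" using pos[of z] \<rho> by (simp add: a_def)
  define P where "P = (\<lambda>\<xi>. p (z + of_real \<rho> * \<xi>))"
  define \<psi> where "\<psi> = (\<lambda>\<xi>. (P \<xi> - a) / (P \<xi> - cnj a))"
  have in_ball: "z + of_real \<rho> * \<xi> \<in> ball z \<rho>" if "\<xi> \<in> ball 0 1" for \<xi>
    using that \<rho> by (simp add: dist_norm norm_mult)
  have den: "P \<xi> - cnj a \<noteq> 0" if "\<xi> \<in> ball 0 1" for \<xi>
    using pos[OF in_ball[OF that]] a by (auto simp: P_def complex_eq_iff)
  have "(p \<circ> (\<lambda>\<xi>. z + of_real \<rho> * \<xi>)) holomorphic_on ball 0 1"
    using holp in_ball by (intro holomorphic_on_compose_gen holomorphic_intros) auto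
  then have holP: "P holomorphic_on ball 0 1"
    by (simp add: P_def o_def)
  have hol\<psi>: "\<psi> holomorphic_on ball 0 1"
    unfolding \<psi>_def using den by (intro holomorphic_intros holP) auto
  have \<psi>0: "\<psi> 0 = 0" by (simp add: \<psi>_def P_def a_def)
  have \<psi>_lt: "norm (\<psi> \<xi>) < 1" if "norm \<xi> < 1" for \<xi>
    using that den[of \<xi>] norm_diff_lt_norm_diff_cnj[OF pos[OF in_ball] a, of \<xi>]
    by (simp add: \<psi>_def P_def norm_divide divide_less_eq)
  have Schwarz: "norm (deriv \<psi> 0) \<le> 1"
    using Schwarz_Lemma(2)[OF hol\<psi> \<psi>0 \<psi>_lt, of 0] by simp
  have "(p has_field_derivative deriv p z) (at z)"
    using holp \<rho> by (intro holomorphic_derivI[of _ "ball z \<rho>"]) auto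
  then have "(P has_field_derivative deriv p z * of_real \<rho>) (at 0)"
    unfolding P_def by (auto intro!: derivative_eq_intros DERIV_chain2[of p])
  then have d\<psi>: "(\<psi> has_field_derivative
      (deriv p z * of_real \<rho> * (a - cnj a) - (a - a) * (deriv p z * of_real \<rho>)) / ((a - cnj a) * (a - cnj a))) (at 0)"
    unfolding \<psi>_def using den[of 0] by (auto intro!: derivative_eq_intros simp: P_def a_def)
  have a_cnj: "a - cnj a = of_real (2 * Im a) * \<i>"
    by (simp add: complex_eq_iff)
  with a have "a - cnj a \<noteq> 0" by simp
  then have "deriv \<psi> 0 = deriv p z * of_real \<rho> / (a - cnj a)"
    using DERIV_imp_deriv[OF d\<psi>] by simp
  then have "norm (deriv \<psi> 0) = norm (deriv p z) * \<rho> / (2 * Im a)"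
    using \<rho> a by (simp add: a_cnj norm_divide norm_mult)
  with Schwarz show ?thesis
    using a \<rho> by (simp add: a_def divide_le_eq pos_le_divide_eq mult.commute)
qed

lemma norm_diff_lt_norm_add_shift:
  assumes "0 \<le> Re w" "0 \<le> a" "0 < e"
  shows "norm (w - of_real a) < norm (w + of_real (a + 2 * e))"
proof -
  have "(Re w + a + 2 * e)^2 - (Re w - a)^2 = (2 * Re w + 2 * e) * (2 * a + 2 * e)"
    by (simp add: power2_eq_square algebra_simps)
  also have "\<dots> > 0" using assms by (intro mult_pos_pos) auto
  finally have "norm (w - of_real a)^2 < norm (w + of_real (a + 2 * e))^2"
    by (simp add: cmod_power2 add.assoc)
  then show ?thesis by (rule power_less_imp_less_base) simp
qed

text \<open>The Moebius map \<open>(F - a) / (F + a)\<close> is shifted by \<open>2 * e\<close> because \<open>F\<close> may touch the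
  imaginary axis.\<close>

lemma Schwarz_Re_nonneg_shifted:
  assumes holF: "F holomorphic_on ball 0 \<rho>" and \<rho>: "0 < \<rho>"
    and pos: "\<And>\<zeta>. \<zeta> \<in> ball 0 \<rho> \<Longrightarrow> 0 \<le> Re (F \<zeta>)"
    and F0: "F 0 = of_real a" and a: "0 \<le> a" and \<zeta>: "norm \<zeta> < \<rho>" and e: "0 < e"
  shows "norm (F \<zeta> - of_real a) \<le> norm \<zeta> / \<rho> * (norm (F \<zeta> - of_real a) + (2 * a + 2 * e))"
proof -
  define P where "P = (\<lambda>\<xi>. F (of_real \<rho> * \<xi>))"
  define \<omega> where "\<omega> = (\<lambda>\<xi>. (P \<xi> - of_real a) / (P \<xi> + of_real (a + 2 * e)))"
  have in_ball: "of_real \<rho> * \<xi> \<in> ball 0 \<rho>" if "\<xi> \<in> ball 0 1" for \<xi> :: complex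
    using that \<rho> by (simp add: norm_mult)
  have den: "P \<xi> + of_real (a + 2 * e) \<noteq> 0" if "\<xi> \<in> ball 0 1" for \<xi>
    using pos[OF in_ball[OF that]] a e by (auto simp: P_def complex_eq_iff)
  have "(F \<circ> (\<lambda>\<xi>. of_real \<rho> * \<xi>)) holomorphic_on ball 0 1"
    using holF in_ball by (intro holomorphic_on_compose_gen holomorphic_intros) auto
  then have "P holomorphic_on ball 0 1"
    by (simp add: P_def o_def)
  then have hol\<omega>: "\<omega> holomorphic_on ball 0 1"
    unfolding \<omega>_def using den by (intro holomorphic_intros) auto
  have \<omega>0: "\<omega> 0 = 0" by (simp add: \<omega>_def P_def F0)
  have \<omega>_lt: "norm (\<omega> \<xi>) < 1" if "norm \<xi> < 1" for \<xi>
    using that den[of \<xi>] norm_diff_lt_norm_add_shift[OF pos[OF in_ball] a e, of \<xi>]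
    by (simp add: \<omega>_def P_def norm_divide divide_less_eq)
  define \<xi> where "\<xi> = \<zeta> / of_real \<rho>"
  have \<xi>: "norm \<xi> = norm \<zeta> / \<rho>" "norm \<xi> < 1" "P \<xi> = F \<zeta>"
    using \<rho> \<zeta> by (simp_all add: \<xi>_def P_def norm_divide)
  have "norm (\<omega> \<xi>) \<le> norm \<zeta> / \<rho>"
    using Schwarz_Lemma(1)[OF hol\<omega> \<omega>0 \<omega>_lt \<xi>(2)] \<xi> by simp
  moreover have "F \<zeta> + of_real (a + 2 * e) \<noteq> 0"
    using den[of \<xi>] \<xi> by simp
  ultimately have "norm (F \<zeta> - of_real a) \<le> norm \<zeta> / \<rho> * norm (F \<zeta> + of_real (a + 2 * e))"
    by (simp add: \<omega>_def \<xi> norm_divide divide_le_eq mult.commute)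
  also have "\<dots> \<le> norm \<zeta> / \<rho> * (norm (F \<zeta> - of_real a) + (2 * a + 2 * e))"
  proof -
    have "F \<zeta> + of_real (a + 2 * e) = (F \<zeta> - of_real a) + of_real (2 * a + 2 * e)"
      by simp
    moreover have "norm (of_real (2 * a + 2 * e) :: complex) = 2 * a + 2 * e"
      using a e by (simp only: norm_of_real abs_of_nonneg)
    ultimately have "norm (F \<zeta> + of_real (a + 2 * e)) \<le> norm (F \<zeta> - of_real a) + (2 * a + 2 * e)"
      by (metis norm_triangle_ineq)
    then show ?thesis using \<rho> by (intro mult_left_mono) auto
  qed
  finally show ?thesis .
qed

lemma Schwarz_Re_nonneg:
  assumes holF: "F holomorphic_on ball 0 \<rho>" and \<rho>: "0 < \<rho>"
    and pos: "\<And>\<zeta>. \<zeta> \<in> ball 0 \<rho> \<Longrightarrow> 0 \<le> Re (F \<zeta>)"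
    and F0: "F 0 = of_real a" and a: "0 \<le> a" and \<zeta>: "norm \<zeta> < \<rho>"
  shows "(1 - norm \<zeta> / \<rho>) * norm (F \<zeta> - of_real a) \<le> 2 * a * (norm \<zeta> / \<rho>)"
proof -
  define q where "q = norm \<zeta> / \<rho>"
  have q: "0 \<le> q" using \<rho> by (simp add: q_def)
  have "norm (F \<zeta> - of_real a) \<le> q * (norm (F \<zeta> - of_real a) + 2 * a)"
  proof (rule field_le_epsilon)
    fix \<epsilon> :: real assume "0 < \<epsilon>"
    define e where "e = \<epsilon> / (2 * q + 1)"
    have e: "0 < e" "q * (2 * e) \<le> \<epsilon>"
      using \<open>0 < \<epsilon>\<close> q by (auto simp: e_def field_simps)
    have "norm (F \<zeta> - of_real a) \<le> q * (norm (F \<zeta> - of_real a) + (2 * a + 2 * e))"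
      unfolding q_def by (rule Schwarz_Re_nonneg_shifted[OF assms e(1)])
    then show "norm (F \<zeta> - of_real a) \<le> q * (norm (F \<zeta> - of_real a) + 2 * a) + \<epsilon>"
      using e(2) by (simp add: algebra_simps)
  qed
  then show ?thesis by (simp add: q_def algebra_simps)
qed

lemma Re_nonneg_on_cball_of_sphere:
  assumes holF: "F holomorphic_on cball a \<rho>"
    and sphere: "\<And>\<zeta>. dist a \<zeta> = \<rho> \<Longrightarrow> 0 \<le> Re (F \<zeta>)" and \<zeta>: "\<zeta> \<in> cball a \<rho>"
  shows "0 \<le> Re (F \<zeta>)"
proof -
  have hol: "(\<lambda>\<zeta>. exp (- F \<zeta>)) holomorphic_on cball a \<rho>"
    using holF by (intro holomorphic_intros)
  have "norm (exp (- F \<zeta>)) \<le> 1"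
  proof (rule maximum_modulus_frontier[of "\<lambda>\<zeta>. exp (- F \<zeta>)" "cball a \<rho>"])
    show "(\<lambda>\<zeta>. exp (- F \<zeta>)) holomorphic_on interior (cball a \<rho>)"
      using hol interior_subset holomorphic_on_subset by blast
    show "continuous_on (closure (cball a \<rho>)) (\<lambda>\<zeta>. exp (- F \<zeta>))"
      using hol holomorphic_on_imp_continuous_on by auto
    show "norm (exp (- F w)) \<le> 1" if "w \<in> frontier (cball a \<rho>)" for w
      using sphere[of w] that by auto
  qed (use \<zeta> in auto)
  then show ?thesis by simp
qed

lemma le_of_le_at_right:
  fixes \<phi> :: "real \<Rightarrow> real"
  assumes lim: "(\<phi> \<longlongrightarrow> \<phi> r) (at_right r)" and "r < b" and le: "\<And>R. r < R \<Longrightarrow> R < b \<Longrightarrow> X \<le> \<phi> R"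
  shows "X \<le> \<phi> r"
proof (rule tendsto_lowerbound[OF lim])
  show "\<forall>\<^sub>F R in at_right r. X \<le> \<phi> R"
    using \<open>r < b\<close> le by (auto simp: eventually_at_right)
qed simp

text \<open>A Phragmen-Lindelof argument: the maximum principle for \<open>|exp (\<i> (f w - w))| =
  exp (Im w - Im (f w))\<close> on the truncated half-plane \<open>Im w > \<delta>\<close>, \<open>|w| < R\<close>, where the exponent is
  at most \<open>\<delta> \<le> \<eta>\<close> on the lower edge and at most \<open>\<eta>\<close> on the arc.\<close>

lemma Im_le_Im_of_asymptotic_identity:
  assumes holf: "f holomorphic_on {w. 0 < Im w}" and pos: "\<And>w. 0 < Im w \<Longrightarrow> 0 < Im (f w)"
    and asym: "\<And>\<delta> \<epsilon>. 0 < \<delta> \<Longrightarrow> 0 < \<epsilon> \<Longrightarrow> \<exists>R. \<forall>w. \<delta> \<le> Im w \<longrightarrow> R \<le> norm w \<longrightarrow> norm (f w - w) \<le> \<epsilon>"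
    and w0: "0 < Im w0"
  shows "Im w0 \<le> Im (f w0)"
proof (rule field_le_epsilon)
  fix \<eta> :: real assume \<eta>: "0 < \<eta>"
  define \<delta> where "\<delta> = min \<eta> (Im w0 / 2)"
  have \<delta>: "0 < \<delta>" using \<eta> w0 by (simp add: \<delta>_def)
  obtain R where R: "\<And>w. \<delta> \<le> Im w \<Longrightarrow> R \<le> norm w \<Longrightarrow> norm (f w - w) \<le> \<eta>"
    using asym[OF \<delta> \<eta>] by blast
  define S where "S = {w. \<delta> < Im w} \<inter> ball 0 (max R (norm w0 + 1))"
  define F where "F = (\<lambda>w. exp (\<i> * (f w - w)))"
  have norm_F: "norm (F w) = exp (Im w - Im (f w))" for w
    by (simp add: F_def)
  have open_S: "open S" unfolding S_def by (intro open_Int open_halfspace_Im_gt open_ball)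
  have closure_S: "closure S \<subseteq> {w. \<delta> \<le> Im w} \<inter> cball 0 (max R (norm w0 + 1))"
    by (rule closure_minimal) (auto simp: S_def intro: closed_Int closed_halfspace_Im_ge)
  have holF: "F holomorphic_on {w. 0 < Im w}"
    unfolding F_def by (intro holomorphic_intros holf)
  have "norm (F w0) \<le> exp \<eta>"
  proof (rule maximum_modulus_frontier[of F S])
    show "F holomorphic_on interior S"
      unfolding interior_open[OF open_S] using holF by (rule holomorphic_on_subset) (use \<delta> in \<open>auto simp: S_def\<close>)
    show "continuous_on (closure S) F"
      using holomorphic_on_imp_continuous_on[OF holF]
      by (rule continuous_on_subset) (use closure_S \<delta> in auto)
    show "bounded S" unfolding S_def by (intro bounded_Int) auto
    show "w0 \<in> S" using w0 by (auto simp: S_def \<delta>_def)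
    show "norm (F w) \<le> exp \<eta>" if "w \<in> frontier S" for w
    proof -
      have w: "w \<in> closure S" "w \<notin> S"
        using that open_S by (auto simp: frontier_def interior_open)
      with closure_S have Im_w: "\<delta> \<le> Im w" by auto
      have "Im w - Im (f w) \<le> \<eta>"
      proof (cases "Im w \<le> \<delta>")
        case True
        then show ?thesis using pos[of w] Im_w \<delta> by (simp add: \<delta>_def)
      next
        case False
        then have "R \<le> norm w" using w by (auto simp: S_def)
        then have "norm (f w - w) \<le> \<eta>" using R Im_w by blast
        then show ?thesis using abs_Im_le_cmod[of "f w - w"] by simp
      qed
      then show ?thesis by (simp add: norm_F)
    qed
  qed
  then show "Im w0 \<le> Im (f w0) + \<eta>" by (simp add: norm_F)
qed

section \<open>Functions near the identity on the exterior of a disc\<close>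

lemma norm_le_norm_add_imaginary:
  assumes "Im z = 0"
  shows "norm z \<le> norm (z + of_real t * \<i>)"
  using assms by (simp add: cmod_def)

lemma open_exterior_disc: "open {z :: complex. R < norm z}"
proof -
  have "{z :: complex. R < norm z} = - cball 0 R" by auto
  then show ?thesis by auto
qed

lemma imaginary_shift_in_upper_exterior:
  assumes "R1 < norm z" "Im z = 0" "0 < t"
  shows "0 < Im (z + of_real t * \<i>)" "R1 < norm (z + of_real t * \<i>)"
  using norm_le_norm_add_imaginary[OF assms(2), of t] assms by auto

lemma closed_upper_exterior_subset_closure:
  "{z. R1 < norm z} \<inter> {z. 0 \<le> Im z} \<subseteq> closure {z. 0 < Im z \<and> R1 < norm z}"
proof
  fix z assume z: "z \<in> {z. R1 < norm z} \<inter> {z. 0 \<le> Im z}"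
  show "z \<in> closure {z. 0 < Im z \<and> R1 < norm z}"
  proof (cases "0 < Im z")
    case True then show ?thesis using z closure_subset by fastforce
  next
    case False
    then have "Im z = 0" using z by auto
    then have "z + of_real (e / 2) * \<i> \<in> {z. 0 < Im z \<and> R1 < norm z}
        \<and> dist (z + of_real (e / 2) * \<i>) z < e" if "0 < e" for e
      using imaginary_shift_in_upper_exterior[of R1 z "e / 2"] z that by (simp add: dist_norm norm_mult)
    then show ?thesis unfolding closure_approachable by blast
  qed
qed

lemma expansion_bound_on_real_axis:
  assumes holG: "G holomorphic_on {z. R1 < norm z}" and R1: "0 < R1" and C: "0 \<le> C"
    and bound: "\<And>z. R1 < norm z \<Longrightarrow> R0 \<le> norm z \<Longrightarrow> Im z \<noteq> 0 \<Longrightarrow>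
      norm (G z - z - of_real h / z) \<le> C / (norm z)^2"
    and z: "R1 < norm z" "R0 \<le> norm z"
  shows "norm (G z - z - of_real h / z) \<le> C / (norm z)^2"
proof (cases "Im z = 0")
  case False then show ?thesis using bound z by blast
next
  case True
  define \<phi> where "\<phi> = (\<lambda>t::real. G (z + of_real t * \<i>) - (z + of_real t * \<i>) - of_real h / (z + of_real t * \<i>))"
  have "isCont G z"
    using holomorphic_on_imp_continuous_on[OF holG] open_exterior_disc z
    by (simp add: continuous_on_eq_continuous_at)
  moreover have line: "isCont (\<lambda>t::real. z + of_real t * \<i>) 0"
    by (intro continuous_intros)
  ultimately have "isCont (\<lambda>t. G (z + of_real t * \<i>)) 0"
    using isCont_o2[OF line, of G] by simp
  then have "isCont \<phi> 0"
    unfolding \<phi>_def using z R1 by (intro continuous_intros) auto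
  then have "(\<phi> \<longlongrightarrow> \<phi> 0) (at_right 0)"
    using isContD Lim_at_imp_Lim_at_within by blast
  moreover have "\<forall>\<^sub>F t in at_right 0. norm (\<phi> t) \<le> C / (norm z)^2"
    using eventually_at_right_less[of "0::real"]
  proof eventually_elim
    case (elim t)
    define y where "y = z + of_real t * \<i>"
    have y: "norm z \<le> norm y" unfolding y_def by (rule norm_le_norm_add_imaginary[OF True])
    have "norm (\<phi> t) \<le> C / (norm y)^2"
      unfolding \<phi>_def y_def[symmetric] using bound[of y] y z elim True by (simp add: y_def)
    also have "\<dots> \<le> C / (norm z)^2"
      using y z R1 C by (intro divide_left_mono power_mono mult_pos_pos) auto
    finally show ?case .
  qed
  ultimately have "norm (\<phi> 0) \<le> C / (norm z)^2"
    by (rule Lim_norm_ubound[rotated]) simp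
  then show ?thesis by (simp add: \<phi>_def)
qed

lemma inverse_in_exterior:
  fixes \<zeta> :: complex
  assumes "\<zeta> \<in> ball 0 (1 / R1) - {0}" "0 < R1"
  shows "R1 < norm (inverse \<zeta>)"
proof -
  have "norm \<zeta> < 1 / R1" "\<zeta> \<noteq> 0" using assms by auto
  then have "R1 < 1 / norm \<zeta>" using \<open>0 < R1\<close> by (simp add: less_divide_eq field_simps)
  then show ?thesis by (simp add: norm_inverse divide_inverse)
qed

lemma inverted_remainder_tendsto:
  fixes G :: "complex \<Rightarrow> complex"
  assumes R1: "0 < R1"
    and bound: "\<And>z. R1 < norm z \<Longrightarrow> R0 \<le> norm z \<Longrightarrow> norm (G z - z - of_real h / z) \<le> C / (norm z)^2"
  shows "((\<lambda>\<zeta>. (G (inverse \<zeta>) - inverse \<zeta>) / \<zeta>) \<longlongrightarrow> of_real h) (at 0)"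
proof -
  define f where "f = (\<lambda>\<zeta>. (G (inverse \<zeta>) - inverse \<zeta>) / \<zeta>)"
  have "((\<lambda>\<zeta>. f \<zeta> - of_real h) \<longlongrightarrow> 0) (at 0)"
  proof (rule Lim_null_comparison)
    show "((\<lambda>\<zeta>::complex. C * norm \<zeta>) \<longlongrightarrow> 0) (at 0)"
      by (auto intro!: tendsto_eq_intros)
    define d where "d = min (1 / R1) (1 / max R0 1)"
    have "0 < d" using R1 by (simp add: d_def)
    moreover have "norm (f \<zeta> - of_real h) \<le> C * norm \<zeta>" if "\<zeta> \<noteq> 0" "norm \<zeta> < d" for \<zeta>
    proof -
      define z where "z = inverse \<zeta>"
      have "norm \<zeta> * max R0 1 < 1"
        using that by (simp add: d_def less_divide_eq)
      then have "max R0 1 < 1 / norm \<zeta>"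
        using that by (simp add: less_divide_eq mult.commute)
      then have "max R0 1 < norm z"
        by (simp add: z_def norm_inverse divide_inverse)
      then have z: "R1 < norm z" "R0 \<le> norm z" "z \<noteq> 0"
        using inverse_in_exterior[of \<zeta> R1] that R1 by (auto simp: z_def d_def)
      have "f \<zeta> - of_real h = (G z - z - of_real h / z) * z"
        using that by (simp add: f_def z_def field_simps)
      then have "norm (f \<zeta> - of_real h) = norm (G z - z - of_real h / z) * norm z"
        by (simp add: norm_mult)
      also have "\<dots> \<le> C / (norm z)^2 * norm z"
        using bound[OF z(1,2)] by (intro mult_right_mono) auto
      also have "\<dots> = C * norm \<zeta>"
        using z by (simp add: z_def norm_divide power2_eq_square field_simps)
      finally show ?thesis .
    qed
    ultimately show "\<forall>\<^sub>F \<zeta> in at 0. norm (f \<zeta> - of_real h) \<le> C * norm \<zeta>"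
      unfolding eventually_at dist_norm by (intro exI[of _ d]) auto
  qed
  then show ?thesis by (simp add: f_def LIM_zero_iff)
qed

lemma inverted_remainder_holomorphic:
  assumes holG: "G holomorphic_on {z. R1 < norm z}" and R1: "0 < R1"
    and bound: "\<And>z. R1 < norm z \<Longrightarrow> R0 \<le> norm z \<Longrightarrow> norm (G z - z - of_real h / z) \<le> C / (norm z)^2"
  obtains Q where "Q holomorphic_on ball 0 (1 / R1)" "Q 0 = of_real h"
    "\<And>\<zeta>. \<zeta> \<in> ball 0 (1 / R1) - {0} \<Longrightarrow> Q \<zeta> = (G (inverse \<zeta>) - inverse \<zeta>) / \<zeta>"
proof -
  define f where "f = (\<lambda>\<zeta>. (G (inverse \<zeta>) - inverse \<zeta>) / \<zeta>)"
  have "inverse ` (ball 0 (1 / R1) - {0}) \<subseteq> {z :: complex. R1 < norm z}"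
    using inverse_in_exterior R1 by auto
  then have "(G \<circ> inverse) holomorphic_on ball 0 (1 / R1) - {0}"
    by (intro holomorphic_on_compose_gen[OF _ holG] holomorphic_intros) auto
  then have holf: "f holomorphic_on ball 0 (1 / R1) - {0}"
    unfolding f_def by (intro holomorphic_intros) (auto simp: o_def)
  have lim: "f \<midarrow>0\<rightarrow> of_real h"
    unfolding f_def by (rule inverted_remainder_tendsto[OF R1 bound])
  have "(\<lambda>\<zeta>. if \<zeta> = 0 then of_real h else f \<zeta>) holomorphic_on ball 0 (1 / R1)"
    by (rule removable_singularity[OF holf open_ball lim])
  then show ?thesis by (rule that) (auto simp: f_def)
qed

lemma Re_mult_circle_factor:
  assumes "norm \<zeta> = \<rho>" "\<zeta> \<noteq> 0"
  shows "Re (A * inverse \<zeta> * (of_real (\<rho>^2) - \<zeta>^2)) = 2 * Im \<zeta> * Im A"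
proof -
  have "of_real (\<rho>^2) = \<zeta> * cnj \<zeta>"
    using complex_norm_square[of \<zeta>] assms by simp
  then have "inverse \<zeta> * (of_real (\<rho>^2) - \<zeta>^2) = cnj \<zeta> - \<zeta>"
    using assms by (simp add: power2_eq_square field_simps)
  then show ?thesis by (simp add: mult.assoc)
qed

text \<open>Here \<open>H \<zeta> = (G (1/\<zeta>) - 1/\<zeta>) (\<rho>^2 - \<zeta>^2) / \<zeta>\<close> with \<open>\<rho> = 1/R\<close>. On the circle \<open>|\<zeta>| = \<rho>\<close> its real
  part is \<open>2 Im \<zeta> Im (G (1/\<zeta>) - 1/\<zeta>) \<ge> 0\<close>, and the minimum principle spreads this to the disc.\<close>

lemma exterior_Herglotz_function:
  assumes holG: "G holomorphic_on {z. R1 < norm z}" and R1: "0 < R1" and R: "R1 < R"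
    and bound: "\<And>z. R1 < norm z \<Longrightarrow> R0 \<le> norm z \<Longrightarrow> norm (G z - z - of_real h / z) \<le> C / (norm z)^2"
    and sign: "\<And>z. R1 < norm z \<Longrightarrow> Im z * Im (G z - z) \<le> 0"
  obtains H where "H holomorphic_on ball 0 (1 / R1)" "H 0 = of_real (h * (1 / R)^2)"
    "\<And>\<zeta>. \<zeta> \<in> cball 0 (1 / R) \<Longrightarrow> 0 \<le> Re (H \<zeta>)"
    "\<And>z. R1 < norm z \<Longrightarrow> H (inverse z) = (G z - z) * z * (of_real ((1 / R)^2) - (inverse z)^2)"
proof -
  define \<rho> where "\<rho> = 1 / R"
  have \<rho>: "0 < \<rho>" "\<rho> < 1 / R1" using R1 R by (auto simp: \<rho>_def frac_less2)
  obtain Q where holQ: "Q holomorphic_on ball 0 (1 / R1)" and Q0: "Q 0 = of_real h"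
    and Q: "\<And>\<zeta>. \<zeta> \<in> ball 0 (1 / R1) - {0} \<Longrightarrow> Q \<zeta> = (G (inverse \<zeta>) - inverse \<zeta>) / \<zeta>"
    using inverted_remainder_holomorphic[OF holG R1 bound] by blast
  define H where "H = (\<lambda>\<zeta>. Q \<zeta> * (of_real (\<rho>^2) - \<zeta>^2))"
  have holH: "H holomorphic_on ball 0 (1 / R1)"
    unfolding H_def by (intro holomorphic_intros holQ)
  have H_inverse: "H (inverse z) = (G z - z) * z * (of_real (\<rho>^2) - (inverse z)^2)"
    if "R1 < norm z" for z
  proof -
    have "1 / norm z < 1 / R1"
      using that R1 by (intro frac_less2) auto
    moreover have "norm (inverse z) = 1 / norm z"
      by (simp add: norm_inverse divide_inverse)
    ultimately have "inverse z \<in> ball 0 (1 / R1) - {0}"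
      using that R1 by auto
    then show ?thesis by (simp add: H_def Q divide_inverse)
  qed
  have "0 \<le> Re (H \<zeta>)" if "\<zeta> \<in> cball 0 \<rho>" for \<zeta>
  proof (rule Re_nonneg_on_cball_of_sphere[OF _ _ that])
    show "H holomorphic_on cball 0 \<rho>"
      using holH by (rule holomorphic_on_subset) (use \<rho> in auto)
    fix \<zeta> :: complex assume "dist 0 \<zeta> = \<rho>"
    then have \<zeta>: "norm \<zeta> = \<rho>" "\<zeta> \<noteq> 0" using \<rho> by auto
    define z where "z = inverse \<zeta>"
    have z: "R1 < norm z"
      using inverse_in_exterior[of \<zeta> R1] \<zeta> \<rho> R1 by (simp add: z_def)
    have "H \<zeta> = (G z - z) * inverse \<zeta> * (of_real (\<rho>^2) - \<zeta>^2)"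
      using H_inverse[OF z] by (simp add: z_def)
    then have "Re (H \<zeta>) = 2 * Im \<zeta> * Im (G z - z)"
      by (simp only: Re_mult_circle_factor[OF \<zeta>])
    moreover have "0 \<le> Im \<zeta> * Im (G z - z)"
    proof -
      have "Im z = - Im \<zeta> / (norm \<zeta>)^2"
        by (simp add: z_def inverse_eq_divide Im_divide cmod_power2)
      then have "- (Im \<zeta> * Im (G z - z)) / (norm \<zeta>)^2 \<le> 0"
        using sign[OF z] by (simp add: mult.commute)
      then show ?thesis using \<zeta> \<rho> by (simp add: zero_le_divide_iff)
    qed
    ultimately show "0 \<le> Re (H \<zeta>)" by simp
  qed
  then show ?thesis
    using that[OF holH] H_inverse by (simp add: H_def Q0 \<rho>_def)
qed

lemma exterior_capacity_nonneg:
  assumes holG: "G holomorphic_on {z. R1 < norm z}" and R1: "0 < R1"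
    and bound: "\<And>z. R1 < norm z \<Longrightarrow> R0 \<le> norm z \<Longrightarrow> norm (G z - z - of_real h / z) \<le> C / (norm z)^2"
    and sign: "\<And>z. R1 < norm z \<Longrightarrow> Im z * Im (G z - z) \<le> 0"
  shows "0 \<le> h"
proof -
  have R: "R1 < R1 + 1" by simp
  obtain H where "H holomorphic_on ball 0 (1 / R1)" and H0: "H 0 = of_real (h * (1 / (R1 + 1))^2)"
    and pos: "\<And>\<zeta>. \<zeta> \<in> cball 0 (1 / (R1 + 1)) \<Longrightarrow> 0 \<le> Re (H \<zeta>)"
    and "\<And>z. R1 < norm z \<Longrightarrow> H (inverse z) = (G z - z) * z * (of_real ((1 / (R1 + 1))^2) - (inverse z)^2)"
    by (rule exterior_Herglotz_function[OF holG R1 R bound sign]) blast+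
  have "0 \<le> Re (H 0)" using R1 by (intro pos) simp
  then show ?thesis using R1 H0 by (simp add: zero_le_mult_iff)
qed

lemma Herglotz_remainder_bound:
  assumes holH: "H holomorphic_on ball 0 \<rho>" and \<rho>: "0 < \<rho>"
    and pos: "\<And>\<zeta>. \<zeta> \<in> ball 0 \<rho> \<Longrightarrow> 0 \<le> Re (H \<zeta>)"
    and H0: "H 0 = of_real (h * \<rho>^2)" and h: "0 \<le> h" and \<zeta>: "norm \<zeta> < \<rho>"
    and E: "(of_real (\<rho>^2) - \<zeta>^2) * E = \<zeta> * ((H \<zeta> - of_real (h * \<rho>^2)) + of_real h * \<zeta>^2)"
  shows "(1 - norm \<zeta> / \<rho>) * ((\<rho>^2 - (norm \<zeta>)^2) * norm E)
    \<le> norm \<zeta> * (2 * (h * \<rho>^2) * (norm \<zeta> / \<rho>) + (1 - norm \<zeta> / \<rho>) * h * (norm \<zeta>)^2)"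
proof -
  have q: "0 \<le> 1 - norm \<zeta> / \<rho>" using \<zeta> \<rho> by simp
  have "\<rho>^2 - (norm \<zeta>)^2 \<le> norm (of_real (\<rho>^2) - \<zeta>^2)"
    using norm_triangle_ineq2[of "of_real (\<rho>^2)" "\<zeta>^2"] by (simp add: norm_power)
  then have "(\<rho>^2 - (norm \<zeta>)^2) * norm E \<le> norm (of_real (\<rho>^2) - \<zeta>^2) * norm E"
    by (rule mult_right_mono) simp
  also have "\<dots> = norm \<zeta> * norm ((H \<zeta> - of_real (h * \<rho>^2)) + of_real h * \<zeta>^2)"
    using E by (metis norm_mult)
  also have "\<dots> \<le> norm \<zeta> * (norm (H \<zeta> - of_real (h * \<rho>^2)) + h * (norm \<zeta>)^2)"
    using h by (intro mult_left_mono order.trans[OF norm_triangle_ineq]) (auto simp: norm_mult norm_power)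
  finally have "(1 - norm \<zeta> / \<rho>) * ((\<rho>^2 - (norm \<zeta>)^2) * norm E)
      \<le> (1 - norm \<zeta> / \<rho>) * (norm \<zeta> * (norm (H \<zeta> - of_real (h * \<rho>^2)) + h * (norm \<zeta>)^2))"
    using q by (rule mult_left_mono)
  also have "\<dots> = norm \<zeta> * ((1 - norm \<zeta> / \<rho>) * norm (H \<zeta> - of_real (h * \<rho>^2))
      + (1 - norm \<zeta> / \<rho>) * h * (norm \<zeta>)^2)"
    by (simp add: algebra_simps)
  also have "\<dots> \<le> norm \<zeta> * (2 * (h * \<rho>^2) * (norm \<zeta> / \<rho>) + (1 - norm \<zeta> / \<rho>) * h * (norm \<zeta>)^2)"
    using Schwarz_Re_nonneg[OF holH \<rho> pos H0 _ \<zeta>] h by (intro mult_left_mono add_right_mono) auto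
  finally show ?thesis .
qed

lemma exterior_remainder_estimate:
  assumes holG: "G holomorphic_on {z. R1 < norm z}" and R1: "0 < R1" and R: "R1 < R"
    and bound: "\<And>z. R1 < norm z \<Longrightarrow> R0 \<le> norm z \<Longrightarrow> norm (G z - z - of_real h / z) \<le> C / (norm z)^2"
    and sign: "\<And>z. R1 < norm z \<Longrightarrow> Im z * Im (G z - z) \<le> 0"
    and z: "R < norm z"
  shows "(norm z - R) * ((norm z)^2 - R^2) * norm z * norm (G z - z - of_real h / z)
    \<le> h * R * (2 * (norm z)^2 + (norm z - R) * R)"
proof -
  obtain H where holH: "H holomorphic_on ball 0 (1 / R1)" and H0: "H 0 = of_real (h * (1 / R)^2)"
    and pos: "\<And>\<zeta>. \<zeta> \<in> cball 0 (1 / R) \<Longrightarrow> 0 \<le> Re (H \<zeta>)"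
    and H: "\<And>w. R1 < norm w \<Longrightarrow> H (inverse w) = (G w - w) * w * (of_real ((1 / R)^2) - (inverse w)^2)"
    by (rule exterior_Herglotz_function[OF holG R1 R bound sign]) blast+
  define \<rho> where "\<rho> = 1 / R"
  define t where "t = norm z"
  define \<zeta> where "\<zeta> = inverse z"
  define E where "E = G z - z - of_real h / z"
  have R0: "0 < R" "R < t" "z \<noteq> 0" using R1 R z by (auto simp: t_def)
  have \<rho>: "0 < \<rho>" "\<rho> < 1 / R1" using R1 R by (auto simp: \<rho>_def frac_less2)
  have \<zeta>: "norm \<zeta> = 1 / t" "norm \<zeta> < \<rho>"
    using R0 by (auto simp: \<zeta>_def t_def \<rho>_def norm_inverse divide_inverse frac_less2)
  have "H holomorphic_on ball 0 \<rho>"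
    using holH by (rule holomorphic_on_subset) (use \<rho> in auto)
  moreover have "(of_real (\<rho>^2) - \<zeta>^2) * E = \<zeta> * ((H \<zeta> - of_real (h * \<rho>^2)) + of_real h * \<zeta>^2)"
    using H[of z] R0 R z by (simp add: E_def \<zeta>_def \<rho>_def field_simps power2_eq_square)
  ultimately have "(1 - norm \<zeta> / \<rho>) * ((\<rho>^2 - (norm \<zeta>)^2) * norm E)
      \<le> norm \<zeta> * (2 * (h * \<rho>^2) * (norm \<zeta> / \<rho>) + (1 - norm \<zeta> / \<rho>) * h * (norm \<zeta>)^2)"
    using Herglotz_remainder_bound[OF _ \<rho>(1) _ _ exterior_capacity_nonneg[OF holG R1 bound sign] \<zeta>(2)]
      pos H0 by (auto simp: \<rho>_def)
  moreover have "(1 - norm \<zeta> / \<rho>) * ((\<rho>^2 - (norm \<zeta>)^2) * norm E)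
      = (t - R) * (t^2 - R^2) * t * norm E / (R^2 * t^4)"
    using R0 by (simp add: \<zeta>(1) \<rho>_def field_simps power2_eq_square power4_eq_xxxx)
  moreover have "norm \<zeta> * (2 * (h * \<rho>^2) * (norm \<zeta> / \<rho>) + (1 - norm \<zeta> / \<rho>) * h * (norm \<zeta>)^2)
      = h * R * (2 * t^2 + (t - R) * R) / (R^2 * t^4)"
    using R0 by (simp add: \<zeta>(1) \<rho>_def field_simps power2_eq_square power4_eq_xxxx)
  ultimately show ?thesis
    using R0 by (simp add: E_def t_def divide_le_cancel)
qed

lemma remainder_bound_from_exterior_estimate:
  fixes t R h e :: real
  assumes t: "6/5 \<le> t" "t \<le> 2" and R: "0 < R" "R \<le> 1/50" and h: "0 \<le> h" and e: "0 \<le> e"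
    and est: "(t - R) * (t^2 - R^2) * t * e \<le> h * R * (2 * t^2 + (t - R) * R)"
  shows "e \<le> 9 * h * R"
proof -
  have "1 \<le> t - R" "1 \<le> t^2 - R^2"
    using t R power_mono[of "6/5" t 2] power_mono[of R "1/50" 2] by (auto simp: power2_eq_square)
  then have "1 * 1 * 1 \<le> (t - R) * (t^2 - R^2) * t"
    using t by (intro mult_mono) auto
  then have "e \<le> (t - R) * (t^2 - R^2) * t * e"
    using e mult_right_mono[of 1 _ e] by simp
  also have "\<dots> \<le> h * R * (2 * t^2 + (t - R) * R)" by (rule est)
  also have "\<dots> \<le> h * R * (2 * 4 + 2 * (1/50))"
    using t R h power_mono[of t 2 2] by (intro mult_left_mono add_mono mult_mono) auto
  also have "\<dots> \<le> 9 * h * R" using h R by simp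
  finally show ?thesis .
qed

lemma capacity_bound_from_exterior_estimate:
  fixes R h e :: real
  assumes R: "0 < R" and e: "0 \<le> e"
    and est: "(4 * R - R) * ((4 * R)^2 - R^2) * (4 * R) * e \<le> h * R * (2 * (4 * R)^2 + (4 * R - R) * R)"
    and Im_pos: "0 < 4 * R - h / (4 * R) + e"
  shows "h \<le> 72 * R^2"
proof -
  have "180 * R^4 * e \<le> 35 * h * R^3"
    using est by (simp add: algebra_simps power2_eq_square power3_eq_cube power4_eq_xxxx)
  then have "36 * (R * e) \<le> 7 * h"
    using R by (simp add: power3_eq_cube power4_eq_xxxx mult_le_cancel_left_pos mult.assoc)
  moreover have "h < 16 * R^2 + 4 * (R * e)"
    using Im_pos R by (simp add: field_simps power2_eq_square)
  ultimately show ?thesis by simp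
qed

section \<open>Elementary estimates at the test points\<close>

lemma sqrt_two_bounds: "7/5 \<le> sqrt (2::real)" "sqrt (2::real) \<le> 3/2"
  by (rule real_le_rsqrt real_le_lsqrt; simp add: power2_eq_square)+

lemma abs_Im_div_norm_diff_le:
  assumes "w0 \<noteq> 0"
  shows "\<bar>Im w / norm w - Im w0 / norm w0\<bar> \<le> 2 * norm (w - w0) / norm w0"
proof (cases "w = 0")
  case True
  then show ?thesis using abs_Im_le_cmod[of w0] assms by (simp add: divide_le_eq)
next
  case False
  have "Im w / norm w - Im w0 / norm w0
      = (Im w - Im w0) / norm w0 + (Im w / norm w) * ((norm w0 - norm w) / norm w0)"
    using False assms by (simp add: field_simps)
  also have "\<bar>\<dots>\<bar> \<le> norm (w - w0) / norm w0 + 1 * (norm (w - w0) / norm w0)"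
  proof (rule order.trans[OF abs_triangle_ineq add_mono])
    show "\<bar>(Im w - Im w0) / norm w0\<bar> \<le> norm (w - w0) / norm w0"
      using abs_Im_le_cmod[of "w - w0"] by (simp add: divide_right_mono)
    have "\<bar>Im w / norm w\<bar> \<le> 1" using abs_Im_le_cmod[of w] False by (simp add: divide_le_eq)
    moreover have "\<bar>(norm w0 - norm w) / norm w0\<bar> \<le> norm (w - w0) / norm w0"
      using norm_triangle_ineq3[of w w0] by (simp add: divide_right_mono)
    ultimately show "\<bar>Im w / norm w * ((norm w0 - norm w) / norm w0)\<bar> \<le> 1 * (norm (w - w0) / norm w0)"
      unfolding abs_mult by (intro mult_mono) auto
  qed
  finally show ?thesis by simp
qed

lemma sin_Arg_perturbation:
  assumes w0: "1/2 \<le> Im w0" and w: "0 < Im w"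
  shows "\<bar>sin (Arg w) / (sqrt 2 / 2) - sqrt 2 * (Im w0 / norm w0)\<bar> \<le> 6 * norm (w - w0)"
proof -
  have ne: "w \<noteq> 0" "w0 \<noteq> 0" and "1/2 \<le> norm w0"
    using assms abs_Im_le_cmod[of w0] by auto
  have "sin (Arg w) / (sqrt 2 / 2) = sqrt 2 * (Im w / norm w)"
    using ne by (simp add: sin_Arg real_div_sqrt field_simps)
  then have "\<bar>sin (Arg w) / (sqrt 2 / 2) - sqrt 2 * (Im w0 / norm w0)\<bar>
      = \<bar>sqrt 2 * (Im w / norm w - Im w0 / norm w0)\<bar>"
    by (simp only: right_diff_distrib)
  also have "\<dots> = sqrt 2 * \<bar>Im w / norm w - Im w0 / norm w0\<bar>"
    by (simp add: abs_mult)
  also have "\<dots> \<le> (3/2) * (2 * norm (w - w0) / norm w0)"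
    using abs_Im_div_norm_diff_le[OF ne(2), of w] sqrt_two_bounds by (intro mult_mono) auto
  also have "\<dots> \<le> (3/2) * (2 * norm (w - w0) / (1/2))"
    using \<open>1/2 \<le> norm w0\<close> by (intro mult_left_mono divide_left_mono) auto
  finally show ?thesis by simp
qed

text \<open>If \<open>T = sqrt (2 Y^2 / S)\<close> then \<open>T^2 - P^2 = N / S\<close> with \<open>N = 2 Y^2 - P^2 S\<close>, and dividing by
  \<open>T + P \<ge> 1/2\<close> gives the bound.\<close>

lemma sqrt_ratio_approx:
  fixes Y S P :: real
  assumes Y: "0 \<le> Y" and S: "1/2 \<le> S" and P: "1/2 \<le> P"
  shows "\<bar>sqrt 2 * Y / sqrt S - P\<bar> \<le> 4 * \<bar>2 * Y^2 - P^2 * S\<bar>"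
proof -
  define T where "T = sqrt 2 * Y / sqrt S"
  have T: "0 \<le> T" using Y S by (simp add: T_def)
  have "T^2 = 2 * Y^2 / S"
    using S by (simp add: T_def power_divide power_mult_distrib)
  then have "(T - P) * (T + P) = (2 * Y^2 - P^2 * S) / S"
    using S by (simp add: field_simps power2_eq_square)
  moreover have "\<bar>(T - P) * (T + P)\<bar> = \<bar>T - P\<bar> * (T + P)"
    using T P by (simp add: abs_mult)
  moreover have "\<bar>(2 * Y^2 - P^2 * S) / S\<bar> = \<bar>2 * Y^2 - P^2 * S\<bar> / S"
    using S by simp
  ultimately have "\<bar>T - P\<bar> * (T + P) = \<bar>2 * Y^2 - P^2 * S\<bar> / S"
    by metis
  also have "\<dots> \<le> 2 * \<bar>2 * Y^2 - P^2 * S\<bar>"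
  proof -
    have "\<bar>2 * Y^2 - P^2 * S\<bar> * 1 \<le> \<bar>2 * Y^2 - P^2 * S\<bar> * (2 * S)"
      using S by (intro mult_left_mono) auto
    then show ?thesis using S by (simp add: divide_le_eq mult.commute mult.left_commute)
  qed
  finally have "\<bar>T - P\<bar> * (T + P) \<le> 2 * \<bar>2 * Y^2 - P^2 * S\<bar>" .
  moreover have "\<bar>T - P\<bar> * (1/2) \<le> \<bar>T - P\<bar> * (T + P)"
    using T P by (intro mult_left_mono) auto
  ultimately have "\<bar>T - P\<bar> * (1/2) \<le> 2 * \<bar>2 * Y^2 - P^2 * S\<bar>" by (rule order.trans[rotated])
  then have "\<bar>T - P\<bar> \<le> 4 * \<bar>2 * Y^2 - P^2 * S\<bar>" by simp
  then show ?thesis by (simp add: T_def)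
qed

lemma abs_add_le: "\<bar>x\<bar> \<le> a \<Longrightarrow> \<bar>y\<bar> \<le> b \<Longrightarrow> \<bar>x + y\<bar> \<le> a + (b :: real)"
  by (meson abs_triangle_ineq add_mono order_trans)

lemma abs_scaled_le: "\<bar>m\<bar> \<le> 1 \<Longrightarrow> \<bar>c * m\<bar> \<le> \<bar>c :: real\<bar>"
  by (simp add: abs_mult mult_left_le)

lemma abs_monomial_le_one:
  fixes x y :: real
  assumes "\<bar>x\<bar> \<le> 1" "\<bar>y\<bar> \<le> 1"
  shows "\<bar>x ^ m * y ^ n\<bar> \<le> 1"
  using assms by (simp add: abs_mult power_abs mult_le_one power_le_one)

text \<open>The numerator \<open>2 Y^2 - P^2 S\<close> of the unperturbed estimate, with \<open>Y = 1 - h/2\<close>,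
  \<open>S = (1 + h/2 - V)^2 + Y^2\<close> and \<open>P = 1 + V/2 + V^2/8 - h/2\<close>, has no terms of order \<open>\<le> 2\<close> except
  \<open>h^2\<close>. Its coefficient polynomials are written with monomials \<open>V^i * h^j\<close> so that each
  monomial is bounded by \<open>1\<close>.\<close>

lemma sin_Arg_numerator_bound:
  fixes V h :: real
  assumes V: "\<bar>V\<bar> \<le> 1/10" and h: "0 \<le> h" "h \<le> 1/100"
  shows "\<bar>2 * (1 - h/2)^2 - (1 + V/2 + V^2/8 - h/2)^2 * ((1 + h/2 - V)^2 + (1 - h/2)^2)\<bar>
    \<le> 4 * h^2 + \<bar>V\<bar> * h + \<bar>V\<bar>^3"
proof -
  define A where "A = (-1/2) * (V^0 * h^0) + (1/2) * (V^0 * h^1) + (-1/8) * (V^0 * h^2)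
    + (-1) * (V^1 * h^0) + (1/2) * (V^1 * h^1) + (-1) * (V^2 * h^0) + (1/16) * (V^2 * h^1)
    + (-3/16) * (V^3 * h^0) + (-1/128) * (V^4 * h^0)"
  define B where "B = (5/4) * (V^0 * h^0) + (3/4) * (V^1 * h^0) + (1/4) * (V^2 * h^0)
    + (1/64) * (V^3 * h^0)"
  define C where "C = (-1/4) * (V^0 * h^0) + (-9/32) * (V^1 * h^0) + (-3/32) * (V^2 * h^0)
    + (-1/64) * (V^3 * h^0)"
  have expansion: "2 * (1 - h/2)^2 - (1 + V/2 + V^2/8 - h/2)^2 * ((1 + h/2 - V)^2 + (1 - h/2)^2)
      = h^2 * A + V^2 * h * B + V^3 * C"
    unfolding A_def B_def C_def by (simp add: field_simps eval_nat_numeral)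
  have small: "\<bar>V\<bar> \<le> 1" "\<bar>h\<bar> \<le> 1" using assms by auto
  have "\<bar>A\<bar> \<le> \<bar>-1/2\<bar> + \<bar>1/2\<bar> + \<bar>-1/8\<bar> + \<bar>-1\<bar> + \<bar>1/2\<bar> + \<bar>-1\<bar> + \<bar>1/16\<bar> + \<bar>-3/16\<bar> + \<bar>-1/128\<bar>"
    unfolding A_def by (intro abs_add_le abs_scaled_le abs_monomial_le_one small)
  then have A: "\<bar>A\<bar> \<le> 4" by simp
  have "\<bar>B\<bar> \<le> \<bar>5/4\<bar> + \<bar>3/4\<bar> + \<bar>1/4\<bar> + \<bar>1/64\<bar>"
    unfolding B_def by (intro abs_add_le abs_scaled_le abs_monomial_le_one small)
  then have B: "\<bar>B\<bar> \<le> 3" by simp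
  have "\<bar>C\<bar> \<le> \<bar>-1/4\<bar> + \<bar>-9/32\<bar> + \<bar>-3/32\<bar> + \<bar>-1/64\<bar>"
    unfolding C_def by (intro abs_add_le abs_scaled_le abs_monomial_le_one small)
  then have C: "\<bar>C\<bar> \<le> 1" by simp
  have "\<bar>h^2 * A\<bar> \<le> 4 * h^2"
    using mult_left_mono[OF A, of "h^2"] by (simp add: abs_mult mult.commute)
  moreover have "\<bar>V^2 * h * B\<bar> \<le> \<bar>V\<bar> * h"
  proof -
    have "\<bar>V^2 * h * B\<bar> = (\<bar>V\<bar> * h) * (\<bar>V\<bar> * \<bar>B\<bar>)"
      using h by (simp add: abs_mult power2_eq_square)
    also have "\<dots> \<le> (\<bar>V\<bar> * h) * 1"
    proof (intro mult_left_mono)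
      have "\<bar>V\<bar> * \<bar>B\<bar> \<le> (1/10) * 3" using V B by (intro mult_mono) auto
      then show "\<bar>V\<bar> * \<bar>B\<bar> \<le> 1" by simp
    qed (use h in simp)
    finally show ?thesis by simp
  qed
  moreover have "\<bar>V^3 * C\<bar> \<le> \<bar>V\<bar>^3"
    using C by (simp add: abs_mult power_abs mult_left_le)
  ultimately have "\<bar>h^2 * A + V^2 * h * B + V^3 * C\<bar> \<le> 4 * h^2 + \<bar>V\<bar> * h + \<bar>V\<bar>^3"
    by (intro abs_add_le)
  then show ?thesis unfolding expansion .
qed

lemma unperturbed_sin_Arg_estimate:
  fixes V h :: real
  assumes V: "\<bar>V\<bar> \<le> 1/10" and h: "0 \<le> h" "h \<le> 1/100"
  shows "\<bar>sqrt 2 * (1 - h/2) / sqrt ((1 + h/2 - V)^2 + (1 - h/2)^2) - (1 + V/2 + V^2/8 - h/2)\<bar>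
    \<le> 4 * (4 * h^2 + \<bar>V\<bar> * h + \<bar>V\<bar>^3)"
proof -
  have "(9/10)^2 \<le> (1 - h/2)^2" using h by (intro power_mono) auto
  moreover have "(9/10 :: real)^2 = 81/100" by (simp add: power2_eq_square)
  ultimately have S: "1/2 \<le> (1 + h/2 - V)^2 + (1 - h/2)^2"
    using zero_le_power2[of "1 + h/2 - V"] by linarith
  have "-1/10 \<le> V" using V by (simp add: abs_le_iff)
  then have P: "1/2 \<le> 1 + V/2 + V^2/8 - h/2"
    using h zero_le_power2[of V] by linarith
  have "\<bar>sqrt 2 * (1 - h/2) / sqrt ((1 + h/2 - V)^2 + (1 - h/2)^2) - (1 + V/2 + V^2/8 - h/2)\<bar>
      \<le> 4 * \<bar>2 * (1 - h/2)^2 - (1 + V/2 + V^2/8 - h/2)^2 * ((1 + h/2 - V)^2 + (1 - h/2)^2)\<bar>"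
    using sqrt_ratio_approx[OF _ S P] h by simp
  also have "\<dots> \<le> 4 * (4 * h^2 + \<bar>V\<bar> * h + \<bar>V\<bar>^3)"
    using sin_Arg_numerator_bound[OF assms] by simp
  finally show ?thesis .
qed

lemma test_point_inverse:
  assumes "s^2 = 1"
  shows "of_real h / (\<i> + of_real s) = of_real (h * s / 2) - \<i> * of_real (h / 2)"
    and "of_real h / (\<i> + of_real s)^2 = - \<i> * of_real (h * s / 2)"
proof -
  have ne: "\<i> + of_real s \<noteq> 0" by (simp add: complex_eq_iff)
  have "(\<i> + of_real s) * (of_real s - \<i>) = 2"
    using assms by (simp add: complex_eq_iff power2_eq_square)
  then show "of_real h / (\<i> + of_real s) = of_real (h * s / 2) - \<i> * of_real (h / 2)"
    using ne by (simp add: field_simps)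
  have "(\<i> + of_real s)^2 * (- \<i> * of_real s) = 2"
    using assms by (simp add: complex_eq_iff power2_eq_square algebra_simps)
  then have "1 / (\<i> + of_real s)^2 = - \<i> * of_real s / 2"
    using ne by (simp add: field_simps)
  then show "of_real h / (\<i> + of_real s)^2 = - \<i> * of_real (h * s / 2)"
    by (metis times_divide_eq_right mult.right_neutral mult.left_commute of_real_mult of_real_divide
        of_real_numeral)
qed

lemma norm_test_point: "s^2 = 1 \<Longrightarrow> norm (\<i> + of_real s) = sqrt 2"
  by (simp add: cmod_def power2_eq_square)

lemma norm_one_plus_imaginary:
  "\<bar>norm (1 + \<i> * of_real t) - 1\<bar> \<le> t^2 / 2"
proof -
  have "1 \<le> norm (1 + \<i> * of_real t)"
    using abs_Re_le_cmod[of "1 + \<i> * of_real t"] by simp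
  moreover have "norm (1 + \<i> * of_real t) \<le> 1 + t^2 / 2"
  proof (rule power2_le_imp_le)
    have "norm (1 + \<i> * of_real t)^2 = 1 + t^2"
      unfolding cmod_power2 by (simp add: power2_eq_square)
    also have "\<dots> \<le> (1 + t^2 / 2)^2"
      using zero_le_power[of "t^2" 2] by (simp add: power2_eq_square algebra_simps)
    finally show "norm (1 + \<i> * of_real t)^2 \<le> (1 + t^2 / 2)^2" .
  qed simp
  ultimately show ?thesis by simp
qed

lemma powr_one_third_cube:
  fixes x :: real
  assumes "0 \<le> x"
  shows "(x powr (1/3))^3 = x"
proof (cases "x = 0")
  case False
  then have "(x powr (1/3))^3 = (x powr (1/3)) powr (real 3)"
    using assms by (subst powr_realpow) auto
  then show ?thesis using assms False by (simp add: powr_powr)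
qed simp

lemma shift_bounds:
  fixes U r h :: real
  assumes U: "\<bar>U\<bar> \<le> (r * h) powr (1/3)" and r: "0 \<le> r" and h: "0 \<le> h" "h \<le> 72 * r^2"
  shows "\<bar>U\<bar>^3 \<le> r * h" and "\<bar>U\<bar> \<le> 5 * r"
proof -
  have "\<bar>U\<bar>^3 \<le> ((r * h) powr (1/3))^3"
    using U by (intro power_mono) auto
  also have "\<dots> = r * h"
    using r h by (simp add: powr_one_third_cube)
  finally show cube: "\<bar>U\<bar>^3 \<le> r * h" .
  also have "\<dots> \<le> r * (72 * r^2)" using h r by (intro mult_left_mono) auto
  also have "\<dots> \<le> (5 * r)^3" using r by (simp add: power3_eq_cube power2_eq_square)
  finally have "\<bar>U\<bar> ^ Suc 2 \<le> (5 * r) ^ Suc 2" by simp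
  then show "\<bar>U\<bar> \<le> 5 * r"
    by (rule power_le_imp_le_base) (use r in simp)
qed

section \<open>Conformal maps of the half-plane minus a bounded set\<close>

text \<open>\<open>D\<close> stands for \<open>\<bbbH> \<setminus> K\<close>, \<open>r\<close> for \<open>r_K\<close> and \<open>h\<close> for \<open>hcap K\<close>; these are the only properties of a
  hull and its mapping-out function that the estimates use.\<close>

locale mapping_out_function =
  fixes D :: "complex set" and g :: "complex \<Rightarrow> complex" and r h :: real
  assumes open_domain: "open D"
    and domain_subset: "D \<subseteq> {z. 0 < Im z}"
    and exterior_in_domain: "\<And>z. 0 < Im z \<Longrightarrow> r < norm z \<Longrightarrow> z \<in> D"
    and radius_nonneg: "0 \<le> r"
    and holomorphic: "g holomorphic_on D"
    and injective: "inj_on g D"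
    and image: "g ` D = {w. 0 < Im w}"
    and expansion: "\<exists>C R. \<forall>z\<in>D. R \<le> norm z \<longrightarrow> norm (g z - z - of_real h / z) \<le> C / (norm z)^2"
begin

lemma Im_pos: "z \<in> D \<Longrightarrow> 0 < Im (g z)"
  using image by auto

lemma expansion_bound:
  obtains C R0 where "0 \<le> C"
    "\<And>z. z \<in> D \<Longrightarrow> R0 \<le> norm z \<Longrightarrow> norm (g z - z - of_real h / z) \<le> C / (norm z)^2"
proof -
  obtain C R0 where C: "\<And>z. z \<in> D \<Longrightarrow> R0 \<le> norm z \<Longrightarrow> norm (g z - z - of_real h / z) \<le> C / (norm z)^2"
    using expansion by blast
  have "C / (norm z)^2 \<le> max C 0 / (norm z)^2" for z
    by (intro divide_right_mono) auto
  with C show ?thesis by (intro that[of "max C 0" R0]) (auto intro: order.trans)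
qed

lemma near_identity_at_infinity:
  assumes \<epsilon>: "0 < \<epsilon>"
  shows "\<exists>R. \<forall>z\<in>D. R \<le> norm z \<longrightarrow> norm (g z - z) \<le> \<epsilon>"
proof -
  obtain C R0 where C0: "0 \<le> C"
    and C: "\<And>z. z \<in> D \<Longrightarrow> R0 \<le> norm z \<Longrightarrow> norm (g z - z - of_real h / z) \<le> C / (norm z)^2"
    by (rule expansion_bound) (rule that)
  show ?thesis
  proof (intro exI ballI impI)
    fix z assume z: "z \<in> D" "max R0 (max 1 ((\<bar>h\<bar> + C) / \<epsilon>)) \<le> norm z"
    then have z1: "1 \<le> norm z" by simp
    have "norm (g z - z) \<le> norm (g z - z - of_real h / z) + norm (of_real h / z)"
      by (metis diff_add_cancel norm_triangle_ineq)
    also have "\<dots> \<le> C / norm z + \<bar>h\<bar> / norm z"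
    proof (intro add_mono)
      have "norm (g z - z - of_real h / z) \<le> C / (norm z)^2"
        using C[of z] z by simp
      also have "\<dots> \<le> C / norm z"
        using z1 C0 self_le_power[of "norm z" 2] by (intro divide_left_mono) (auto intro!: mult_pos_pos)
      finally show "norm (g z - z - of_real h / z) \<le> C / norm z" .
    qed (simp add: norm_divide)
    also have "\<dots> \<le> \<epsilon>"
      using z z1 \<epsilon> by (simp add: add_divide_distrib[symmetric] divide_le_eq mult.commute pos_divide_le_eq)
    finally show "norm (g z - z) \<le> \<epsilon>" .
  qed
qed

lemma inverse_near_identity_at_infinity:
  assumes inv: "\<And>z. z \<in> D \<Longrightarrow> f (g z) = z" and \<delta>: "0 < \<delta>" and \<epsilon>: "0 < \<epsilon>"
  shows "\<exists>R. \<forall>w. \<delta> \<le> Im w \<longrightarrow> R \<le> norm w \<longrightarrow> norm (f w - w) \<le> \<epsilon>"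
proof -
  define e where "e = min \<epsilon> (\<delta> / 40)"
  have e: "0 < e" using \<delta> \<epsilon> by (simp add: e_def)
  obtain R1 where R1: "\<And>z. z \<in> D \<Longrightarrow> R1 \<le> norm z \<Longrightarrow> norm (g z - z) \<le> e"
    using near_identity_at_infinity[OF e] by blast
  show ?thesis
  proof (intro exI allI impI)
    fix w assume w: "\<delta> \<le> Im w" "max R1 r + \<delta> + 1 \<le> norm w"
    have disc: "x \<in> D \<and> R1 \<le> norm x" if "x \<in> cball w (\<delta> / 2)" for x
    proof -
      have "norm (w - x) \<le> \<delta> / 2" using that by (simp add: dist_norm)
      moreover have "Im w - Im x \<le> norm (w - x)" "norm w - norm x \<le> norm (w - x)"
        using abs_Im_le_cmod[of "w - x"] norm_triangle_ineq3[of w x] by auto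
      ultimately have "0 < Im x" "max R1 r < norm x" using w \<delta> by linarith+
      then show ?thesis using exterior_in_domain by auto
    qed
    then have "cball w (\<delta> / 2) \<subseteq> D" "\<And>x. x \<in> cball w (\<delta> / 2) \<Longrightarrow> norm (g x - x) \<le> e"
      using R1 by auto
    moreover have "0 < \<delta> / 2" "e \<le> \<delta> / 2 / 20" using \<delta> by (auto simp: e_def)
    ultimately obtain z where z: "z \<in> ball w (\<delta> / 2 / 2)" "g z = w"
      using near_identity_attains_centre[OF holomorphic open_domain] by blast
    have "z \<in> cball w (\<delta> / 2)" using z(1) \<delta> by auto
    with disc have "f w = z" "norm (g z - z) \<le> e" using inv R1 z(2) by auto
    then show "norm (f w - w) \<le> \<epsilon>" using z(2) by (simp add: e_def norm_minus_commute)
  qed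
qed

lemma Im_le:
  assumes "z \<in> D"
  shows "Im (g z) \<le> Im z"
proof -
  obtain f where holf: "f holomorphic_on g ` D" and inv: "\<And>z. z \<in> D \<Longrightarrow> f (g z) = z"
    using holomorphic_has_inverse[OF holomorphic open_domain injective] by metis
  have "Im (g z) \<le> Im (f (g z))"
  proof (rule Im_le_Im_of_asymptotic_identity)
    show "f holomorphic_on {w. 0 < Im w}" using holf image by simp
    show "0 < Im (f w)" if "0 < Im w" for w
    proof -
      from that image obtain z' where "z' \<in> D" "w = g z'" by auto
      then show ?thesis using inv domain_subset by auto
    qed
    show "\<exists>R. \<forall>w. \<delta> \<le> Im w \<longrightarrow> R \<le> norm w \<longrightarrow> norm (f w - w) \<le> \<epsilon>" if "0 < \<delta>" "0 < \<epsilon>" for \<delta> \<epsilon>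
      using inverse_near_identity_at_infinity[OF inv that] .
  qed (use assms Im_pos in auto)
  then show ?thesis using inv assms by simp
qed

lemma norm_deriv_le:
  assumes R: "r < R" and z: "0 < Im z" "R \<le> norm z"
  shows "norm (deriv g z) \<le> 2 * R / (R - r)"
proof -
  define d where "d = min (Im z) (norm z - r)"
  have d: "0 < d" using z R by (simp add: d_def)
  have disc: "ball z d \<subseteq> D"
  proof
    fix x assume "x \<in> ball z d"
    then have "norm (z - x) < d" by (simp add: dist_norm)
    moreover have "Im z - Im x \<le> norm (z - x)" "norm z - norm x \<le> norm (z - x)"
      using abs_Im_le_cmod[of "z - x"] norm_triangle_ineq3[of z x] by auto
    ultimately show "x \<in> D" using exterior_in_domain by (simp add: d_def)
  qed
  have "norm (deriv g z) \<le> 2 * Im (g z) / d"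
    using Schwarz_Pick_half_plane[of g z d] holomorphic disc d Im_pos
    by (meson holomorphic_on_subset subsetD)
  also have "\<dots> \<le> 2 * Im z / d"
    using Im_le[of z] disc d by (intro divide_right_mono) (auto simp: subset_iff)
  also have "\<dots> \<le> 2 * R / (R - r)"
  proof -
    have "Im z \<le> norm z" using abs_Im_le_cmod[of z] by simp
    moreover have "R * r \<le> norm z * r"
      using z radius_nonneg by (intro mult_right_mono) auto
    then have "norm z \<le> R / (R - r) * (norm z - r)"
      using R by (simp add: field_simps)
    moreover have "Im z \<le> R / (R - r) * Im z"
      using R z radius_nonneg by (simp add: field_simps)
    ultimately have "Im z \<le> R / (R - r) * d"
      by (simp add: d_def min_def)
    then show ?thesis using d by (simp add: divide_simps)
  qed
  finally show ?thesis .
qed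

lemma norm_diff_le_exterior:
  assumes R: "r < R" "R < R1" and x: "0 < Im x" "R1 < norm x" and y: "0 < Im y" "R1 < norm y"
    and xy: "norm (x - y) < R1 - R"
  shows "norm (g x - g y) \<le> 2 * R / (R - r) * norm (x - y)"
proof -
  have segment: "0 < Im \<xi> \<and> R < norm \<xi>" if \<xi>: "\<xi> \<in> closed_segment x y" for \<xi>
  proof
    have "closed_segment x y \<subseteq> {z. 0 < Im z}"
      using x y convex_halfspace_Im_gt[of 0] by (intro closed_segment_subset) auto
    then show "0 < Im \<xi>" using \<xi> by auto
    have "norm (x - \<xi>) < R1 - R"
      using dist_in_closed_segment[OF \<xi>] xy by (simp add: dist_norm norm_minus_commute)
    then show "R < norm \<xi>"
      using x norm_triangle_ineq3[of x \<xi>] by auto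
  qed
  show ?thesis
  proof (rule field_differentiable_bound[of "closed_segment x y" g "deriv g"])
    show "(g has_field_derivative deriv g z) (at z within closed_segment x y)"
      if "z \<in> closed_segment x y" for z
      using segment[OF that] exterior_in_domain[of z] R(1) holomorphic open_domain
      by (intro holomorphic_derivI) auto
    show "norm (deriv g z) \<le> 2 * R / (R - r)" if "z \<in> closed_segment x y" for z
      using segment[OF that] norm_deriv_le[OF R(1)] by simp
  qed auto
qed

lemma uniformly_continuous_on_exterior:
  assumes R1: "r < R1"
  shows "uniformly_continuous_on {z. 0 < Im z \<and> R1 < norm z} g"
  unfolding uniformly_continuous_on_def
proof (intro allI impI)
  fix e :: real assume e: "0 < e"
  define R where "R = (r + R1) / 2"
  have R: "r < R" "R < R1" using R1 by (auto simp: R_def)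
  define M where "M = 2 * R / (R - r)"
  have M: "0 \<le> M" using R radius_nonneg by (simp add: M_def)
  define d where "d = min (R1 - R) (e / (M + 1))"
  have d: "0 < d" using e R M by (simp add: d_def)
  have "dist (g x') (g x) < e"
    if "x \<in> {z. 0 < Im z \<and> R1 < norm z}" "x' \<in> {z. 0 < Im z \<and> R1 < norm z}" "dist x' x < d" for x x'
  proof -
    have "norm (g x' - g x) \<le> M * norm (x' - x)"
      using norm_diff_le_exterior[OF R] that by (simp add: M_def dist_norm d_def)
    also have "\<dots> \<le> M * (e / (M + 1))"
      using that M by (intro mult_left_mono) (auto simp: dist_norm d_def)
    also have "\<dots> < e" using e M by (simp add: field_simps)
    finally show ?thesis by (simp add: dist_norm)
  qed
  with d show "\<exists>d>0. \<forall>x\<in>{z. 0 < Im z \<and> R1 < norm z}. \<forall>x'\<in>{z. 0 < Im z \<and> R1 < norm z}.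
      dist x' x < d \<longrightarrow> dist (g x') (g x) < e"
    by blast
qed

lemma extension_real_on_axis:
  assumes R1: "r < R1"
    and cont: "continuous_on (closure {z. 0 < Im z \<and> R1 < norm z}) ext"
    and ext_g: "\<And>x. 0 < Im x \<Longrightarrow> R1 < norm x \<Longrightarrow> g x = ext x"
    and z: "R1 < norm z" "z \<in> \<real>"
  shows "ext z \<in> \<real>"
proof (rule ccontr)
  assume "ext z \<notin> \<real>"
  define X where "X = {z. 0 < Im z \<and> R1 < norm z}"
  define e where "e = \<bar>Im (ext z)\<bar> / 2"
  have e: "0 < e" using \<open>ext z \<notin> \<real>\<close> by (simp add: e_def complex_is_Real_iff)
  have z0: "Im z = 0" using z by (simp add: complex_is_Real_iff)
  then have "z \<in> closure X"
    using closed_upper_exterior_subset_closure[of R1] z unfolding X_def by auto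
  then obtain d where d: "0 < d" and near: "\<And>x'. x' \<in> closure X \<Longrightarrow> dist x' z < d \<Longrightarrow> dist (ext x') (ext z) < e"
    using cont[folded X_def] e unfolding continuous_on_iff by metis
  define t where "t = min (d / 2) e"
  have t: "0 < t" using d e by (simp add: t_def)
  define y where "y = z + of_real t * \<i>"
  have y: "0 < Im y" "R1 < norm y"
    using imaginary_shift_in_upper_exterior[OF z(1) z0 t] by (simp_all add: y_def)
  then have "y \<in> closure X" using closure_subset by (force simp: X_def)
  moreover have "dist y z < d" using t d by (simp add: y_def dist_norm norm_mult t_def)
  ultimately have "dist (ext y) (ext z) < e" by (rule near)
  then have "\<bar>Im (ext y) - Im (ext z)\<bar> < e"
    using abs_Im_le_cmod[of "ext y - ext z"] by (simp add: dist_norm)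
  moreover have "y \<in> D" using y R1 exterior_in_domain by simp
  then have "0 < Im (ext y)" "Im (ext y) \<le> t"
    using Im_pos[of y] Im_le[of y] ext_g[OF y] z0 by (auto simp: y_def)
  ultimately show False using t by (auto simp: e_def t_def abs_if split: if_split_asm)
qed

text \<open>Since \<open>0 < Im (g z) \<le> Im z\<close>, the boundary values of \<open>g\<close> on the real axis outside the disc of
  radius \<open>r\<close> are real, so \<open>g\<close> reflects across the real axis there.\<close>

lemma reflection:
  assumes R1: "r < R1"
  obtains G where "G holomorphic_on {z. R1 < norm z}"
    "\<And>z. R1 < norm z \<Longrightarrow> 0 < Im z \<Longrightarrow> G z = g z"
    "\<And>z. R1 < norm z \<Longrightarrow> Im z < 0 \<Longrightarrow> G z = cnj (g (cnj z))"
proof -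
  define X where "X = {z. 0 < Im z \<and> R1 < norm z}"
  define S where "S = {z :: complex. R1 < norm z}"
  obtain ext where "uniformly_continuous_on (closure X) ext" and ext_g: "\<And>x. x \<in> X \<Longrightarrow> g x = ext x"
    using uniformly_continuous_on_extension_on_closure[OF uniformly_continuous_on_exterior[OF R1]]
    unfolding X_def by metis
  then have cont: "continuous_on (closure X) ext"
    using uniformly_continuous_imp_continuous by blast
  have "X \<subseteq> D" using exterior_in_domain R1 radius_nonneg by (auto simp: X_def)
  then have "g holomorphic_on X" using holomorphic holomorphic_on_subset by blast
  then have "ext holomorphic_on X" using ext_g holomorphic_transform by metis
  moreover have "S \<inter> {z. 0 < Im z} = X" by (auto simp: S_def X_def)
  ultimately have "ext holomorphic_on S \<inter> {z. 0 < Im z}" by simp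
  moreover have "continuous_on (S \<inter> {z. 0 \<le> Im z}) ext"
    using cont closed_upper_exterior_subset_closure continuous_on_subset
    unfolding S_def X_def by blast
  moreover have "open S" "cnj ` S \<subseteq> S"
    using open_exterior_disc by (auto simp: S_def)
  moreover have "ext z \<in> \<real>" if "z \<in> S" "z \<in> \<real>" for z
    using extension_real_on_axis[OF R1 cont[unfolded X_def]] ext_g that by (auto simp: X_def S_def)
  ultimately have "(\<lambda>z. if 0 \<le> Im z then ext z else cnj (ext (cnj z))) holomorphic_on S"
    using Schwarz_reflection by blast
  then show ?thesis
    by (rule that[unfolded S_def[symmetric]]) (auto simp: ext_g X_def S_def)
qed

lemma reflection_towards_axis:
  assumes R1: "r < R1"
    and upper: "\<And>z. R1 < norm z \<Longrightarrow> 0 < Im z \<Longrightarrow> G z = g z"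
    and lower: "\<And>z. R1 < norm z \<Longrightarrow> Im z < 0 \<Longrightarrow> G z = cnj (g (cnj z))"
    and z: "R1 < norm z"
  shows "Im z * Im (G z - z) \<le> 0"
proof -
  have in_D: "w \<in> D" if "R1 < norm w" "0 < Im w" for w
    using that R1 exterior_in_domain by simp
  consider "0 < Im z" | "Im z < 0" | "Im z = 0" by linarith
  then show ?thesis
  proof cases
    case 1
    then show ?thesis using Im_le[OF in_D] upper z by (simp add: mult_nonneg_nonpos)
  next
    case 2
    then have "Im z \<le> Im (G z)" using Im_le[OF in_D, of "cnj z"] lower z by simp
    with 2 show ?thesis by (simp add: mult_nonpos_nonneg)
  qed simp
qed

lemma reflected_extension:
  assumes R1: "r < R1"
  obtains G C R0 where "G holomorphic_on {z. R1 < norm z}"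
    "\<And>z. R1 < norm z \<Longrightarrow> 0 < Im z \<Longrightarrow> G z = g z"
    "\<And>z. R1 < norm z \<Longrightarrow> R0 \<le> norm z \<Longrightarrow> norm (G z - z - of_real h / z) \<le> C / (norm z)^2"
    "\<And>z. R1 < norm z \<Longrightarrow> Im z * Im (G z - z) \<le> 0"
proof -
  obtain G where holG: "G holomorphic_on {z. R1 < norm z}"
    and upper: "\<And>z. R1 < norm z \<Longrightarrow> 0 < Im z \<Longrightarrow> G z = g z"
    and lower: "\<And>z. R1 < norm z \<Longrightarrow> Im z < 0 \<Longrightarrow> G z = cnj (g (cnj z))"
    by (rule reflection[OF R1]) (rule that)
  obtain C R0 where C0: "0 \<le> C"
    and C: "\<And>z. z \<in> D \<Longrightarrow> R0 \<le> norm z \<Longrightarrow> norm (g z - z - of_real h / z) \<le> C / (norm z)^2"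
    by (rule expansion_bound) (rule that)
  have in_D: "z \<in> D" if "R1 < norm z" "0 < Im z" for z
    using that R1 exterior_in_domain by simp
  have off_axis: "norm (G z - z - of_real h / z) \<le> C / (norm z)^2"
    if z: "R1 < norm z" "R0 \<le> norm z" "Im z \<noteq> 0" for z
  proof (cases "0 < Im z")
    case True
    then show ?thesis using C[OF in_D[OF z(1) True] z(2)] upper[OF z(1) True] by simp
  next
    case False
    then have "Im z < 0" using z by simp
    then have "norm (G z - z - of_real h / z) = norm (g (cnj z) - cnj z - of_real h / cnj z)"
      using lower z by (metis complex_cnj_cnj complex_cnj_diff complex_cnj_divide complex_cnj_complex_of_real complex_mod_cnj)
    then show ?thesis
      using C[OF in_D, of "cnj z"] \<open>Im z < 0\<close> z by simp
  qed
  have sign: "Im z * Im (G z - z) \<le> 0" if "R1 < norm z" for z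
    using reflection_towards_axis[OF R1 upper lower that] .
  show ?thesis
  proof (rule that[OF holG upper _ sign])
    show "norm (G z - z - of_real h / z) \<le> C / (norm z)^2"
      if "R1 < norm z" "R0 \<le> norm z" for z
      by (rule expansion_bound_on_real_axis[OF holG _ C0 off_axis that]) (use R1 radius_nonneg in auto)
  qed
qed

lemma capacity_nonneg: "0 \<le> h"
proof -
  have R1: "r < r + 1" "0 < r + 1" using radius_nonneg by auto
  obtain G C R0 where holG: "G holomorphic_on {z. r + 1 < norm z}"
    and "\<And>z. r + 1 < norm z \<Longrightarrow> 0 < Im z \<Longrightarrow> G z = g z"
    and bound: "\<And>z. r + 1 < norm z \<Longrightarrow> R0 \<le> norm z \<Longrightarrow> norm (G z - z - of_real h / z) \<le> C / (norm z)^2"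
    and sign: "\<And>z. r + 1 < norm z \<Longrightarrow> Im z * Im (G z - z) \<le> 0"
    by (rule reflected_extension[OF R1(1)]) (rule that)
  show ?thesis by (rule exterior_capacity_nonneg[OF holG R1(2) bound sign])
qed

lemma exterior_estimate:
  assumes R: "r < R" and z: "0 < Im z" "R < norm z"
  shows "(norm z - R) * ((norm z)^2 - R^2) * norm z * norm (g z - z - of_real h / z)
    \<le> h * R * (2 * (norm z)^2 + (norm z - R) * R)"
proof -
  define R1 where "R1 = (r + R) / 2"
  have R1: "r < R1" "0 < R1" "R1 < R" using R radius_nonneg by (auto simp: R1_def)
  obtain G C R0 where holG: "G holomorphic_on {z. R1 < norm z}"
    and upper: "\<And>z. R1 < norm z \<Longrightarrow> 0 < Im z \<Longrightarrow> G z = g z"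
    and bound: "\<And>z. R1 < norm z \<Longrightarrow> R0 \<le> norm z \<Longrightarrow> norm (G z - z - of_real h / z) \<le> C / (norm z)^2"
    and sign: "\<And>z. R1 < norm z \<Longrightarrow> Im z * Im (G z - z) \<le> 0"
    by (rule reflected_extension[OF R1(1)]) (rule that)
  have "G z = g z" using upper[of z] z R1 by simp
  then show ?thesis
    using exterior_remainder_estimate[OF holG R1(2,3) bound sign z(2)] by simp
qed

lemma capacity_le: "h \<le> 72 * r^2"
proof -
  have "h \<le> 72 * R^2" if R: "r < R" for R
  proof -
    define z where "z = of_real (4 * R) * \<i>"
    define E where "E = g z - z - of_real h / z"
    have R0: "0 < R" using R radius_nonneg by simp
    have z: "norm z = 4 * R" "Im z = 4 * R" using R0 by (simp_all add: z_def norm_mult)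
    have "Im (of_real h / z) = - h / (4 * R)"
      using R0 by (simp add: z_def Im_divide power2_eq_square)
    then have "Im (g z) = 4 * R - h / (4 * R) + Im E" using z by (simp add: E_def)
    moreover have "0 < Im (g z)" using Im_pos exterior_in_domain z R R0 by simp
    moreover have "Im E \<le> norm E" using abs_Im_le_cmod[of E] by simp
    ultimately have "0 < 4 * R - h / (4 * R) + norm E" by linarith
    moreover have "(4 * R - R) * ((4 * R)^2 - R^2) * (4 * R) * norm E
        \<le> h * R * (2 * (4 * R)^2 + (4 * R - R) * R)"
      using exterior_estimate[OF R, of z] z R0 by (simp add: E_def)
    ultimately show ?thesis
      using capacity_bound_from_exterior_estimate[OF R0 norm_ge_zero] by blast
  qed
  then show ?thesis
    by (intro le_of_le_at_right[of "\<lambda>R. 72 * R^2" r "r + 1"]) (auto intro!: tendsto_intros)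
qed

lemma remainder_le:
  assumes r: "r < 1/50" and \<xi>: "0 < Im \<xi>" "6/5 \<le> norm \<xi>" "norm \<xi> \<le> 2"
  shows "norm (g \<xi> - \<xi> - of_real h / \<xi>) \<le> 9 * h * r"
proof -
  have "norm (g \<xi> - \<xi> - of_real h / \<xi>) \<le> 9 * h * R" if R: "r < R" "R < 1/50" for R
  proof (rule remainder_bound_from_exterior_estimate[OF \<xi>(2,3) _ _ capacity_nonneg norm_ge_zero])
    show "0 < R" "R \<le> 1/50" using R radius_nonneg by auto
    show "(norm \<xi> - R) * ((norm \<xi>)^2 - R^2) * norm \<xi> * norm (g \<xi> - \<xi> - of_real h / \<xi>)
        \<le> h * R * (2 * (norm \<xi>)^2 + (norm \<xi> - R) * R)"
      using exterior_estimate[OF R(1) \<xi>(1)] \<xi> R by simp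
  qed
  then show ?thesis
    using r by (intro le_of_le_at_right[of "\<lambda>R. 9 * h * R" r "1/50"]) (auto intro!: tendsto_intros)
qed

lemma small_capacity:
  assumes "r \<le> 1/100"
  shows "h \<le> r" and "h^2 \<le> h * r"
proof -
  have "r * (72 * r) \<le> r * 1" using assms radius_nonneg
    by (intro mult_left_mono) auto
  then have "72 * r^2 \<le> r" by (simp add: power2_eq_square)
  then show "h \<le> r" using capacity_le by simp
  then show "h^2 \<le> h * r" using capacity_nonneg by (simp add: power2_eq_square mult_left_mono)
qed

lemma remainder_at_test_point:
  assumes r: "r \<le> 1/100" and s: "s^2 = 1"
  shows "norm (g (\<i> + of_real s) - (\<i> + of_real s) - of_real h / (\<i> + of_real s)) \<le> 9 * h * r"
  using remainder_le[of "\<i> + of_real s"] r norm_test_point[OF s] sqrt_two_bounds by simp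

lemma Im_at_test_point:
  assumes r: "r \<le> 1/100" and s: "s^2 = 1"
  shows "\<bar>Im (g (\<i> + of_real s)) - (1 - h / 2)\<bar> \<le> 9 * (h * r)"
proof -
  define E where "E = g (\<i> + of_real s) - (\<i> + of_real s) - of_real h / (\<i> + of_real s)"
  have "Im (g (\<i> + of_real s)) - (1 - h / 2) = Im E"
    by (simp add: E_def test_point_inverse(1)[OF s])
  also have "\<bar>Im E\<bar> \<le> norm E" by (rule abs_Im_le_cmod)
  also have "\<dots> \<le> 9 * h * r" unfolding E_def by (rule remainder_at_test_point[OF assms])
  finally show ?thesis by (simp add: mult.assoc)
qed

lemma deriv_at_test_point:
  assumes r: "r \<le> 1/100" and s: "s^2 = 1"
  shows "\<bar>norm (deriv g (\<i> + of_real s)) - 1\<bar> \<le> 91 * (h * r)"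
proof -
  define z0 where "z0 = \<i> + of_real s"
  define \<phi> where "\<phi> = (\<lambda>\<xi>. g \<xi> - \<xi> - of_real h / \<xi>)"
  have z0: "Im z0 = 1" "norm z0 = sqrt 2" "z0 \<noteq> 0"
    using norm_test_point[OF s] by (auto simp: z0_def complex_eq_iff)
  have near_z0: "0 < Im \<xi> \<and> 6/5 \<le> norm \<xi> \<and> norm \<xi> \<le> 2" if "\<xi> \<in> cball z0 (1/10)" for \<xi>
  proof -
    have "norm (z0 - \<xi>) \<le> 1/10" using that by (simp add: dist_norm)
    moreover have "Im z0 - Im \<xi> \<le> norm (z0 - \<xi>)" "\<bar>norm z0 - norm \<xi>\<bar> \<le> norm (z0 - \<xi>)"
      using abs_Im_le_cmod[of "z0 - \<xi>"] norm_triangle_ineq3[of z0 \<xi>] by auto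
    ultimately show ?thesis using z0 sqrt_two_bounds by (auto simp: abs_le_iff)
  qed
  have disc: "cball z0 (1/10) \<subseteq> D - {0}"
    using near_z0 exterior_in_domain r by fastforce
  moreover have "z0 \<in> cball z0 (1/10)" by simp
  ultimately have "z0 \<in> D" by blast
  have "\<phi> holomorphic_on D - {0}"
    unfolding \<phi>_def by (intro holomorphic_intros holomorphic_on_subset[OF holomorphic]) auto
  then have "norm (deriv \<phi> z0) \<le> 9 * h * r / (1/10)"
    using open_domain disc near_z0 remainder_le r
    by (intro norm_deriv_le_of_norm_le_on_cball[of _ "D - {0}"]) (auto simp: \<phi>_def)
  moreover have "deriv \<phi> z0 = deriv g z0 - 1 + of_real h / z0^2"
  proof (rule DERIV_imp_deriv)
    have "(g has_field_derivative deriv g z0) (at z0)"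
      using holomorphic open_domain \<open>z0 \<in> D\<close> by (intro holomorphic_derivI[of _ D]) auto
    then show "(\<phi> has_field_derivative deriv g z0 - 1 + of_real h / z0^2) (at z0)"
      unfolding \<phi>_def using z0 by (auto intro!: derivative_eq_intros simp: field_simps power2_eq_square)
  qed
  ultimately have deriv_g: "deriv g z0 = (1 + \<i> * of_real (h * s / 2)) + deriv \<phi> z0"
    and deriv_\<phi>: "norm (deriv \<phi> z0) \<le> 90 * (h * r)"
    using test_point_inverse(2)[OF s] by (simp_all add: z0_def)
  have "\<bar>norm (deriv g z0) - norm (1 + \<i> * of_real (h * s / 2))\<bar> \<le> norm (deriv \<phi> z0)"
    using norm_triangle_ineq3[of "deriv g z0" "1 + \<i> * of_real (h * s / 2)"] by (simp add: deriv_g)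
  moreover have "(h * s / 2)^2 / 2 = h^2 / 8"
    using s by (simp add: power_mult_distrib power_divide)
  then have "\<bar>norm (1 + \<i> * of_real (h * s / 2)) - 1\<bar> \<le> h^2 / 8"
    using norm_one_plus_imaginary[of "h * s / 2"] by simp
  ultimately have "\<bar>norm (deriv g z0) - 1\<bar> \<le> 91 * (h * r)"
    using deriv_\<phi> small_capacity[OF r] mult_nonneg_nonneg[OF capacity_nonneg radius_nonneg]
    by linarith
  then show ?thesis by (simp add: z0_def)
qed

lemma sin_Arg_at_test_point:
  assumes r: "r \<le> 1/100" and s: "s^2 = 1" and U: "\<bar>U\<bar> \<le> (r * h) powr (1/3)"
  shows "\<bar>sin (Arg (g (\<i> + of_real s) - of_real U)) / (sqrt 2 / 2) - (1 + s * U / 2 + U^2 / 8 - h / 2)\<bar>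
    \<le> 100 * (h * r)"
proof -
  define z0 where "z0 = \<i> + of_real s"
  define E where "E = g z0 - z0 - of_real h / z0"
  define V where "V = s * U"
  define w0 where "w0 = of_real (s * (1 + h/2 - V)) + \<i> * of_real (1 - h/2)"
  define w where "w = g z0 - of_real U"
  define P where "P = 1 + V/2 + V^2/8 - h/2"
  have h: "0 \<le> h" "h \<le> r" "h^2 \<le> h * r" using capacity_nonneg small_capacity[OF r] by auto
  have "\<bar>s\<bar> = 1" using s by (auto simp: power2_eq_1_iff)
  then have "\<bar>V\<bar> = \<bar>U\<bar>" by (simp add: V_def abs_mult)
  then have V: "\<bar>V\<bar>^3 \<le> r * h" "\<bar>V\<bar> \<le> 5 * r"
    using shift_bounds[OF U radius_nonneg h(1) capacity_le] by simp_all
  have "w - w0 = E"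
    using s by (simp add: w_def w0_def E_def z0_def V_def test_point_inverse(1)[OF s]
        complex_eq_iff power2_eq_square algebra_simps)
  moreover have "z0 \<in> D" using exterior_in_domain r norm_test_point[OF s] sqrt_two_bounds
    by (simp add: z0_def)
  then have "0 < Im w" using Im_pos by (simp add: w_def)
  moreover have Im_w0: "Im w0 = 1 - h/2" using h r by (simp add: w0_def)
  ultimately have perturbation: "\<bar>sin (Arg w) / (sqrt 2 / 2) - sqrt 2 * (Im w0 / norm w0)\<bar> \<le> 6 * norm E"
    using sin_Arg_perturbation[of w0 w] h r by simp
  have "norm w0 = sqrt ((1 + h/2 - V)^2 + (1 - h/2)^2)"
    using s by (simp add: w0_def cmod_def power_mult_distrib)
  then have unperturbed: "\<bar>sqrt 2 * (Im w0 / norm w0) - P\<bar> \<le> 4 * (4 * h^2 + \<bar>V\<bar> * h + \<bar>V\<bar>^3)"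
    using unperturbed_sin_Arg_estimate[of V h] V h r radius_nonneg by (simp add: Im_w0 P_def)
  have "1 + s * U / 2 + U^2 / 8 - h / 2 = P"
    using s by (simp add: P_def V_def power_mult_distrib)
  then have "\<bar>sin (Arg w) / (sqrt 2 / 2) - (1 + s * U / 2 + U^2 / 8 - h / 2)\<bar>
      \<le> 6 * norm E + 4 * (4 * h^2 + \<bar>V\<bar> * h + \<bar>V\<bar>^3)"
    using perturbation unperturbed by linarith
  also have "\<dots> \<le> 100 * (h * r)"
    using remainder_at_test_point[OF r s] mult_right_mono[OF V(2) h(1)] V(1) h(3)
      mult_nonneg_nonneg[OF h(1) radius_nonneg]
    by (simp add: E_def z0_def algebra_simps)
  finally show ?thesis by (simp add: w_def z0_def)
qed

end

lemma mapping_out_function_of_hull: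
  assumes hull: "is_hull K" and gK: "is_gK K g h"
  shows "mapping_out_function (UHP - K) g (hull_rad K) h"
proof
  have K: "K \<subseteq> UHP" "bounded K" "closure K \<inter> UHP = K"
    using hull by (auto simp: is_hull_def)
  obtain a where "\<And>x. x \<in> K \<Longrightarrow> norm x \<le> a" using \<open>bounded K\<close> bounded_iff by blast
  then have bdd: "bdd_above (insert 0 (norm ` K))"
    by (intro bdd_aboveI[of _ "max a 0"]) force
  show "0 \<le> hull_rad K"
    unfolding hull_rad_def by (rule cSup_upper[OF _ bdd]) simp
  show "z \<in> UHP - K" if "0 < Im z" "hull_rad K < norm z" for z
  proof -
    have "norm z \<le> hull_rad K" if "z \<in> K"
      unfolding hull_rad_def by (rule cSup_upper[OF _ bdd]) (use that in auto)
    with that show ?thesis by (force simp: UHP_def)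
  qed
  have "UHP - K = UHP \<inter> - closure K" using K by auto
  then show "open (UHP - K)"
    by (auto simp: UHP_def intro!: open_Int open_halfspace_Im_gt)
qed (use gK in \<open>auto simp: is_gK_def UHP_def\<close>)

theorem lemma2p7:
  "\<exists>r0 > 0. \<exists>c :: real. \<forall>K g h U.
     is_hull K \<longrightarrow> is_gK K g h \<longrightarrow> hull_rad K \<le> r0 \<longrightarrow>
     \<bar>U\<bar> \<le> (hull_rad K * h) powr (1/3) \<longrightarrow>
     (\<forall>s \<in> {-1, 1 :: real}.
        let r = hull_rad K; z = \<i> + of_real s in
        \<bar>Im (g z) - (1 - h / 2)\<bar> \<le> c * (h * r) \<and>
        \<bar>norm (deriv g z) - 1\<bar> \<le> c * (h * r) \<and>
        \<bar>sin (Arg (g z - of_real U)) / (sqrt 2 / 2)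
           - (1 + s * U / 2 + U^2 / 8 - h / 2)\<bar> \<le> c * (h * r + r^3))"
proof (rule exI[of _ "1/100"], intro conjI exI[of _ 100] allI impI ballI)
  fix K g h U s
  assume hull: "is_hull K" and gK: "is_gK K g h" and r: "hull_rad K \<le> 1/100"
    and U: "\<bar>U\<bar> \<le> (hull_rad K * h) powr (1/3)" and "s \<in> {-1, 1 :: real}"
  interpret mapping_out_function "UHP - K" g "hull_rad K" h
    using mapping_out_function_of_hull[OF hull gK] .
  have s: "s^2 = 1" using \<open>s \<in> {-1, 1}\<close> by auto
  have "0 \<le> h * hull_rad K" "0 \<le> hull_rad K ^ 3"
    using capacity_nonneg radius_nonneg by simp_all
  then show "let r = hull_rad K; z = \<i> + of_real s in
        \<bar>Im (g z) - (1 - h / 2)\<bar> \<le> 100 * (h * r) \<and>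
        \<bar>norm (deriv g z) - 1\<bar> \<le> 100 * (h * r) \<and>
        \<bar>sin (Arg (g z - of_real U)) / (sqrt 2 / 2)
           - (1 + s * U / 2 + U^2 / 8 - h / 2)\<bar> \<le> 100 * (h * r + r^3)"
    using Im_at_test_point[OF r s] deriv_at_test_point[OF r s] sin_Arg_at_test_point[OF r s U]
    unfolding Let_def distrib_left by (intro conjI) linarith+
qed simp

end
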